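(* Let $\mathbf{B}^{\mathrm{gap}}$ be the gap-insertion bialgebra of noncrossing partitions (with product $\cdot$, coproduct $\Delta_0$, counit $\varepsilon_{\mathrm{gap}}$) and $\mathbf{B}^{\mathrm{bl}}$ the block-substitution bialgebra of noncrossing partitions (product $m_{\mathrm{bl}}$), and let $\rho:\mathbf{B}^{\mathrm{gap}}\to\mathbf{B}^{\mathrm{gap}}\otimes\mathbf{B}^{\mathrm{bl}}$ be the coaction defined in the context. Then $\rho$ makes $\mathbf{B}^{\mathrm{gap}}$ a comodule bialgebra over $\mathbf{B}^{\mathrm{bl}}$; that is, for all $P,Q\in\mathbf{B}^{\mathrm{gap}}$: $$\rho(\mathbf 1)=\mathbf1\otimes\mathbf1,\qquad\rho(P\cdot Q)=\rho(P)\rho(Q),\qquad(\varepsilon_{\mathrm{gap}}\otimes\operatorname{Id})\rho(P)=\varepsilon_{\mathrm{gap}}(P)\mathbf 1,$$ $$(\Delta_0\otimes\operatorname{Id})\circ\rho(P)=(\operatorname{Id}\otimes\operatorname{Id}\otimes m_{\mathrm{bl}})\circ(\operatorname{Id}\otimes\tau\otimes\operatorname{Id})\circ(\rho\otimes\rho)\circ\Delta_0(P),$$ where $\tau:\mathbf{B}^{\mathrm{bl}}\otimes\mathbf{B}^{\mathrm{gap}}\to\mathbf{B}^{\mathrm{gap}}\otimes\mathbf{B}^{\mathrm{bl}}$ is the flip $b\otimes a\mapsto a\otimes b$.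
   Context: A partition of degree $n$ is a set partition of $[n]$ (degree $0$: only the empty partition $\emptyset$); it is noncrossing if there are no $a<c<b<d$ with $a,b$ in one block and $c,d$ in another. Partitions of finite linearly ordered sets are identified with partitions of $[n]$ via the order-preserving bijection; $P_{|X}$ is the induced partition on $X$. $\operatorname{Conv}(X)=\{\min X,\dots,\max X\}$; on blocks of $P$ let $\pi\to\rho$ iff $\operatorname{Conv}(\pi)\cap\rho\neq\emptyset$ (transitively closed). Upperset $U$: ($\pi\in U,\pi\to\rho$)$\Rightarrow\rho\in U$; lowerset $L$: ($\pi\in L,\sigma\to\pi$)$\Rightarrow\sigma\in L$. A cut $(L,U)$ splits the blocks into a lowerset $L$ and its complement $U$; $L$ is identified with the restriction of $P$ to the union of its blocks, with elements $x_1<\dots<x_k$; put $D_0=\{y<x_1\}$, $D_i=\{x_i<y<x_{i+1}\}$, $D_k=\{y>x_k\}$ ($D_0=[n]$ if $k=0$) and $U_i=P_{|D_i}$ (possibly $\emptyset$). $\mathbf{B}^{\mathrm{gap}}$ is the free associative unital algebra generated by all noncrossing partitions including $\emptyset$ (a generator distinct from the unit $\mathbf 1$), with coproduct $\Delta_0(P)=\sum_{(L,U)}L\otimes U_0U_1\cdots U_k$ extended multiplicatively and counit $\varepsilon_{\mathrm{gap}}(\emptyset)=1$, $\varepsilon_{\mathrm{gap}}(P)=0$ for $P$ nonempty. $\mathbf{B}^{\mathrm{bl}}$ is the free commutative unital algebra on nonempty noncrossing partitions; for noncrossing $P\leq Q$ (refinement: each block of $Q$ a union of blocks of $P$), $Q=\{\tau_1,\dots,\tau_l\}$,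 put $P/Q=P_{|\tau_1}\cdots P_{|\tau_l}\in\mathbf{B}^{\mathrm{bl}}$; its coproduct is $\delta(P)=\sum_{Q\geq P\text{ noncrossing}}Q\otimes P/Q$ (multiplicative), counit $1$ on one-block partitions and $0$ on others. The coaction $\rho$ is the algebra morphism with $\rho(P)=\sum_{Q\geq P\text{ noncrossing}}Q\otimes P/Q$ for nonempty noncrossing $P$ and $\rho(\emptyset)=\emptyset\otimes\mathbf 1$. *)

theory Defs
  imports Main "HOL-Library.Poly_Mapping" "HOL-Library.Multiset"
begin

type_synonym part = "nat set set"

definition is_partition :: "nat \<Rightarrow> part \<Rightarrow> bool" where
  "is_partition n P \<longleftrightarrow> (\<forall>B\<in>P. B \<noteq> {}) \<and> (\<forall>B\<in>P. \<forall>C\<in>P. B \<noteq> C \<longrightarrow> B \<inter> C = {})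
     \<and> \<Union>P = {1..n}"

definition deg :: "part \<Rightarrow> nat" where
  "deg P = card (\<Union>P)"

definition noncrossing :: "part \<Rightarrow> bool" where
  "noncrossing P \<longleftrightarrow> \<not> (\<exists>B\<in>P. \<exists>C\<in>P. B \<noteq> C \<and>
      (\<exists>a b c d. a < c \<and> c < b \<and> b < d \<and> a \<in> B \<and> b \<in> B \<and> c \<in> C \<and> d \<in> C))"

definition NC :: "part \<Rightarrow> bool" where
  "NC P \<longleftrightarrow> (\<exists>n. is_partition n P) \<and> noncrossing P"

text \<open>Order-preserving identification of a finite set X of naturals with [card X].\<close>
definition rank :: "nat set \<Rightarrow> nat \<Rightarrow> nat" where
  "rank X y = card {z\<in>X. z \<le> y}"

definition restr :: "part \<Rightarrow> nat set \<Rightarrow> part" where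
  "restr P X = (\<lambda>B. rank X ` (B \<inter> X)) ` {B\<in>P. B \<inter> X \<noteq> {}}"

definition Conv :: "nat set \<Rightarrow> nat set" where
  "Conv X = {Min X..Max X}"

definition arrow :: "part \<Rightarrow> nat set \<Rightarrow> nat set \<Rightarrow> bool" where
  "arrow P \<pi> \<sigma> \<longleftrightarrow> (\<pi>, \<sigma>) \<in> {(\<pi>, \<sigma>). \<pi> \<in> P \<and> \<sigma> \<in> P \<and> Conv \<pi> \<inter> \<sigma> \<noteq> {}}\<^sup>+"

definition lowerset :: "part \<Rightarrow> part \<Rightarrow> bool" where
  "lowerset P L \<longleftrightarrow> L \<subseteq> P \<and> (\<forall>\<pi>\<in>L. \<forall>\<sigma>\<in>P. arrow P \<sigma> \<pi> \<longrightarrow> \<sigma> \<in> L)"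

text \<open>The gap D_i (i = 0..k) determined by X = {x_1 < ... < x_k} inside [deg P].\<close>
definition gap :: "part \<Rightarrow> nat set \<Rightarrow> nat \<Rightarrow> nat set" where
  "gap P X i = {y \<in> {1..deg P}.
      (i = 0 \<or> sorted_list_of_set X ! (i - 1) < y) \<and> (i = card X \<or> y < sorted_list_of_set X ! i)}"

definition refines :: "part \<Rightarrow> part \<Rightarrow> bool" where
  "refines P Q \<longleftrightarrow> (\<forall>\<tau>\<in>Q. \<exists>S\<subseteq>P. \<tau> = \<Union>S)"

definition coarser_NC :: "part \<Rightarrow> part set" where
  "coarser_NC P = {Q. is_partition (deg P) Q \<and> noncrossing Q \<and> refines P Q}"

text \<open>P/Q as a monomial of the free commutative algebra B^bl.\<close>
definition quot :: "part \<Rightarrow> part \<Rightarrow> part multiset" where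
  "quot P Q = image_mset (\<lambda>\<tau>. restr P \<tau>) (mset_set Q)"

text \<open>Words of partitions are the basis of B^gap (free associative algebra),
  multisets of nonempty partitions the basis of B^bl (free commutative algebra).\<close>
type_synonym word = "part list"
type_synonym mono = "part multiset"

definition pm_scale :: "'k::comm_ring_1 \<Rightarrow> ('b \<Rightarrow>\<^sub>0 'k) \<Rightarrow> ('b \<Rightarrow>\<^sub>0 'k)" where
  "pm_scale c f = Poly_Mapping.map (\<lambda>x. c * x) f"

definition pm_ext :: "('b \<Rightarrow> ('c \<Rightarrow>\<^sub>0 'k::comm_ring_1)) \<Rightarrow> ('b \<Rightarrow>\<^sub>0 'k) \<Rightarrow> ('c \<Rightarrow>\<^sub>0 'k)" where
  "pm_ext \<phi> f = (\<Sum>a\<in>Poly_Mapping.keys f. pm_scale (Poly_Mapping.lookup f a) (\<phi> a))"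

definition pm_conv :: "('b \<Rightarrow> 'b \<Rightarrow> 'b) \<Rightarrow> ('b \<Rightarrow>\<^sub>0 'k::comm_ring_1) \<Rightarrow> ('b \<Rightarrow>\<^sub>0 'k) \<Rightarrow> ('b \<Rightarrow>\<^sub>0 'k)" where
  "pm_conv m f g = (\<Sum>a\<in>Poly_Mapping.keys f. \<Sum>b\<in>Poly_Mapping.keys g. Poly_Mapping.single (m a b) (Poly_Mapping.lookup f a * Poly_Mapping.lookup g b))"

definition pm_tprod :: "('b \<Rightarrow>\<^sub>0 'k::comm_ring_1) \<Rightarrow> ('c \<Rightarrow>\<^sub>0 'k) \<Rightarrow> ('b \<times> 'c \<Rightarrow>\<^sub>0 'k)" where
  "pm_tprod f g = (\<Sum>a\<in>Poly_Mapping.keys f. \<Sum>b\<in>Poly_Mapping.keys g. Poly_Mapping.single (a, b) (Poly_Mapping.lookup f a * Poly_Mapping.lookup g b))"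

definition pm_tensor_map :: "('b \<Rightarrow> ('d \<Rightarrow>\<^sub>0 'k::comm_ring_1)) \<Rightarrow> ('c \<Rightarrow> ('e \<Rightarrow>\<^sub>0 'k))
     \<Rightarrow> ('b \<times> 'c \<Rightarrow>\<^sub>0 'k) \<Rightarrow> ('d \<times> 'e \<Rightarrow>\<^sub>0 'k)" where
  "pm_tensor_map \<phi> \<psi> = pm_ext (\<lambda>(x, y). pm_tprod (\<phi> x) (\<psi> y))"

definition pm_relabel :: "('b \<Rightarrow> 'c) \<Rightarrow> ('b \<Rightarrow>\<^sub>0 'k::comm_ring_1) \<Rightarrow> ('c \<Rightarrow>\<^sub>0 'k)" where
  "pm_relabel h = pm_ext (\<lambda>x. Poly_Mapping.single (h x) 1)"

definition pm_basis :: "'b \<Rightarrow> ('b \<Rightarrow>\<^sub>0 'k::comm_ring_1)" where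
  "pm_basis x = Poly_Mapping.single x 1"

definition gap_mult :: "(word \<Rightarrow>\<^sub>0 'k::comm_ring_1) \<Rightarrow> (word \<Rightarrow>\<^sub>0 'k) \<Rightarrow> (word \<Rightarrow>\<^sub>0 'k)" where
  "gap_mult = pm_conv (@)"

definition gap_one :: "word \<Rightarrow>\<^sub>0 'k::comm_ring_1" where
  "gap_one = pm_basis []"

definition bl_one :: "mono \<Rightarrow>\<^sub>0 'k::comm_ring_1" where
  "bl_one = pm_basis {#}"

definition m_bl :: "(mono \<times> mono \<Rightarrow>\<^sub>0 'k::comm_ring_1) \<Rightarrow> (mono \<Rightarrow>\<^sub>0 'k)" where
  "m_bl = pm_relabel (\<lambda>(a, b). a + b)"

definition gg_mult :: "(word \<times> word \<Rightarrow>\<^sub>0 'k::comm_ring_1) \<Rightarrow> _ \<Rightarrow> _" where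
  "gg_mult = pm_conv (\<lambda>(a, b) (c, d). (a @ c, b @ d))"

definition gb_mult :: "(word \<times> mono \<Rightarrow>\<^sub>0 'k::comm_ring_1) \<Rightarrow> _ \<Rightarrow> _" where
  "gb_mult = pm_conv (\<lambda>(a, b) (c, d). (a @ c, b + d))"

definition Delta0_gen :: "part \<Rightarrow> (word \<times> word \<Rightarrow>\<^sub>0 'k::comm_ring_1)" where
  "Delta0_gen P = (\<Sum>L\<in>{L. lowerset P L}.
      pm_basis ([restr P (\<Union>L)],
                map (\<lambda>i. restr P (gap P (\<Union>L) i)) [0..<card (\<Union>L) + 1]))"

definition Delta0_word :: "word \<Rightarrow> (word \<times> word \<Rightarrow>\<^sub>0 'k::comm_ring_1)" where
  "Delta0_word w = foldr (\<lambda>P acc. gg_mult (Delta0_gen P) acc) w (pm_basis ([], []))"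

definition Delta0 :: "(word \<Rightarrow>\<^sub>0 'k::comm_ring_1) \<Rightarrow> (word \<times> word \<Rightarrow>\<^sub>0 'k)" where
  "Delta0 = pm_ext Delta0_word"

definition eps_gap_word :: "word \<Rightarrow> 'k::comm_ring_1" where
  "eps_gap_word w = (if (\<forall>P\<in>set w. P = {}) then 1 else 0)"

definition eps_gap :: "(word \<Rightarrow>\<^sub>0 'k::comm_ring_1) \<Rightarrow> 'k" where
  "eps_gap f = (\<Sum>w\<in>Poly_Mapping.keys f. Poly_Mapping.lookup f w * eps_gap_word w)"

definition rho_gen :: "part \<Rightarrow> (word \<times> mono \<Rightarrow>\<^sub>0 'k::comm_ring_1)" where
  "rho_gen P = (if P = {} then pm_basis ([{}], {#})
                else (\<Sum>Q\<in>coarser_NC P. pm_basis ([Q], quot P Q)))"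

definition rho_word :: "word \<Rightarrow> (word \<times> mono \<Rightarrow>\<^sub>0 'k::comm_ring_1)" where
  "rho_word w = foldr (\<lambda>P acc. gb_mult (rho_gen P) acc) w (pm_basis ([], {#}))"

definition rho :: "(word \<Rightarrow>\<^sub>0 'k::comm_ring_1) \<Rightarrow> (word \<times> mono \<Rightarrow>\<^sub>0 'k)" where
  "rho = pm_ext rho_word"

definition in_Bgap :: "(word \<Rightarrow>\<^sub>0 'k::comm_ring_1) \<Rightarrow> bool" where
  "in_Bgap f \<longleftrightarrow> (\<forall>w\<in>Poly_Mapping.keys f. \<forall>P\<in>set w. NC P)"

end

theory Submission
  imports Defs
begin

(* All maps in the four identities are linear, and rho, Delta_0 and the counit are multiplicative
   for the relevant products on words, so each identity reduces to a single noncrossing partition P.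
   For the counit: a nonempty P has only nonempty coarsenings, on which the counit vanishes.

   For the compatibility with Delta_0, both sides applied to P are sums of basis elements indexed
   by finite sets, matched by a bijection. A pair (Q, L) of a noncrossing coarsening Q of P and a
   lowerset L of Q is cut along X = Union L: it gives the lowerset {pi in P. pi <= X} of P together
   with the restrictions of Q to X and to the gaps D_0, ..., D_k of X, which are noncrossing
   coarsenings of the corresponding restrictions of P. Conversely such coarsenings glue to a
   noncrossing coarsening of P: blocks lying in different pieces cannot cross, because each gap
   contains every point between two of its elements. As every block of Q lies in exactly one piece,
   P/Q is the product of the quotients of the pieces, which is the coefficient on the other side. *)

lemma lookup_pm_scale [simp]:
  "Poly_Mapping.lookup (pm_scale c f) x = c * Poly_Mapping.lookup f x"
  unfolding pm_scale_def by (simp add: Poly_Mapping.map.rep_eq when_def)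

lemma pm_scale_add_left: "pm_scale (c + d) f = pm_scale c f + pm_scale d f"
  by (rule poly_mapping_eqI) (simp add: lookup_add algebra_simps)

lemma pm_scale_sum: "pm_scale c (sum f A) = (\<Sum>a\<in>A. pm_scale c (f a))"
  by (rule poly_mapping_eqI) (simp add: lookup_sum sum_distrib_left)

lemma pm_scale_sum_left: "pm_scale (sum f A) x = (\<Sum>a\<in>A. pm_scale (f a) x)"
  by (rule poly_mapping_eqI) (simp add: lookup_sum sum_distrib_right)

lemma pm_scale_zero [simp]: "pm_scale 0 f = 0" "pm_scale c 0 = 0"
  by (rule poly_mapping_eqI, simp)+

lemma pm_scale_one [simp]: "pm_scale 1 f = f"
  by (rule poly_mapping_eqI) simp

lemma pm_scale_scale [simp]: "pm_scale c (pm_scale d f) = pm_scale (c * d) f"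
  by (rule poly_mapping_eqI) (simp add: mult.assoc)

lemma pm_scale_single [simp]:
  "pm_scale c (Poly_Mapping.single x d) = Poly_Mapping.single x (c * d)"
  by (rule poly_mapping_eqI) (simp add: lookup_single when_def)

lemma pm_ext_superset:
  assumes "finite S" "Poly_Mapping.keys f \<subseteq> S"
  shows "pm_ext \<phi> f = (\<Sum>a\<in>S. pm_scale (Poly_Mapping.lookup f a) (\<phi> a))"
  unfolding pm_ext_def
  by (rule sum.mono_neutral_left) (use assms in \<open>auto simp: in_keys_iff\<close>)

lemma pm_ext_add: "pm_ext \<phi> (f + g) = pm_ext \<phi> f + pm_ext \<phi> g"
proof -
  let ?S = "Poly_Mapping.keys f \<union> Poly_Mapping.keys g"
  have "pm_ext \<phi> (f + g) = (\<Sum>a\<in>?S. pm_scale (Poly_Mapping.lookup (f + g) a) (\<phi> a))"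
    by (rule pm_ext_superset) (simp_all add: keys_add)
  also have "\<dots> = (\<Sum>a\<in>?S. pm_scale (Poly_Mapping.lookup f a) (\<phi> a))
      + (\<Sum>a\<in>?S. pm_scale (Poly_Mapping.lookup g a) (\<phi> a))"
    by (simp add: lookup_add pm_scale_add_left sum.distrib)
  also have "\<dots> = pm_ext \<phi> f + pm_ext \<phi> g"
    by (simp add: pm_ext_superset[symmetric])
  finally show ?thesis .
qed

lemma pm_ext_zero [simp]: "pm_ext \<phi> 0 = 0"
  by (simp add: pm_ext_def)

lemma pm_ext_scale: "pm_ext \<phi> (pm_scale c f) = pm_scale c (pm_ext \<phi> f)"
proof -
  have "pm_ext \<phi> (pm_scale c f)
      = (\<Sum>a\<in>Poly_Mapping.keys f. pm_scale (Poly_Mapping.lookup (pm_scale c f) a) (\<phi> a))"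
    by (rule pm_ext_superset) (auto simp: in_keys_iff)
  then show ?thesis by (simp add: pm_ext_def pm_scale_sum)
qed

lemma pm_ext_sum: "pm_ext \<phi> (sum f A) = (\<Sum>a\<in>A. pm_ext \<phi> (f a))"
  by (induction A rule: infinite_finite_induct) (auto simp: pm_ext_add)

lemma pm_ext_single: "pm_ext \<phi> (Poly_Mapping.single x c) = pm_scale c (\<phi> x)"
  by (subst pm_ext_superset[of "{x}"]) auto

lemma pm_ext_basis [simp]: "pm_ext \<phi> (pm_basis x) = \<phi> x"
  by (simp add: pm_basis_def pm_ext_single)

lemma pm_ext_cong:
  "(\<And>a. a \<in> Poly_Mapping.keys f \<Longrightarrow> \<phi> a = \<psi> a) \<Longrightarrow> pm_ext \<phi> f = pm_ext \<psi> f"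
  by (simp add: pm_ext_def)

lemma pm_ext_compose: "pm_ext \<psi> (pm_ext \<phi> f) = pm_ext (\<lambda>a. pm_ext \<psi> (\<phi> a)) f"
  by (simp add: pm_ext_def[of \<phi>] pm_ext_sum pm_ext_scale) (simp add: pm_ext_def)

lemma pm_ext_basis_id: "pm_ext pm_basis f = f"
  by (rule poly_mapping_eqI)
    (auto simp: pm_ext_def pm_basis_def lookup_sum lookup_single when_def in_keys_iff)

definition pm_linear :: "(('b \<Rightarrow>\<^sub>0 'k::comm_ring_1) \<Rightarrow> ('c \<Rightarrow>\<^sub>0 'k)) \<Rightarrow> bool" where
  "pm_linear F \<longleftrightarrow> (\<forall>f. F f = pm_ext (\<lambda>a. F (pm_basis a)) f)"

lemma pm_linear_ext: "pm_linear (pm_ext \<phi>)"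
  by (simp add: pm_linear_def)

lemma pm_linear_id: "pm_linear (\<lambda>f. f)"
  by (simp add: pm_linear_def pm_ext_basis_id)

lemma pm_linearD: "pm_linear F \<Longrightarrow> F f = pm_ext (\<lambda>a. F (pm_basis a)) f"
  unfolding pm_linear_def by (rule spec)

lemma pm_linear_comp:
  assumes F: "pm_linear F" and G: "pm_linear G"
  shows "pm_linear (\<lambda>f. F (G f))"
  unfolding pm_linear_def
proof
  fix f
  have "F (G f) = pm_ext (\<lambda>a. F (pm_basis a)) (pm_ext (\<lambda>a. G (pm_basis a)) f)"
    by (subst pm_linearD[OF G], rule pm_linearD[OF F])
  also have "\<dots> = pm_ext (\<lambda>a. pm_ext (\<lambda>a. F (pm_basis a)) (G (pm_basis a))) f"
    by (rule pm_ext_compose)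
  also have "\<dots> = pm_ext (\<lambda>a. F (G (pm_basis a))) f"
    by (simp add: pm_linearD[OF F, symmetric])
  finally show "F (G f) = pm_ext (\<lambda>a. F (G (pm_basis a))) f" .
qed

lemma pm_linear_eq_on_keys:
  assumes F: "pm_linear F" and G: "pm_linear G"
    and eq: "\<And>a. a \<in> Poly_Mapping.keys f \<Longrightarrow> F (pm_basis a) = G (pm_basis a)"
  shows "F f = G f"
  by (subst pm_linearD[OF F], subst pm_linearD[OF G]) (rule pm_ext_cong[OF eq])

lemma pm_linear_eqI:
  assumes "pm_linear F" "pm_linear G" "\<And>a. F (pm_basis a) = G (pm_basis a)"
  shows "F f = G f"
  using pm_linear_eq_on_keys[OF assms(1,2)] assms(3) by blast

lemma pm_linear_sum: "pm_linear F \<Longrightarrow> F (sum f A) = (\<Sum>a\<in>A. F (f a))"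
  by (subst (1 2) pm_linearD[of F]) (simp_all add: pm_ext_sum)

lemma pm_linear_scale: "pm_linear F \<Longrightarrow> F (pm_scale c f) = pm_scale c (F f)"
  by (subst (1 2) pm_linearD[of F]) (simp_all add: pm_ext_scale)

text \<open>Common generalisation of \<open>pm_conv\<close> and \<open>pm_tprod\<close>, with factors from different spaces.\<close>

definition pm_bilin ::
  "('b \<Rightarrow> 'c \<Rightarrow> 'd) \<Rightarrow> ('b \<Rightarrow>\<^sub>0 'k::comm_ring_1) \<Rightarrow> ('c \<Rightarrow>\<^sub>0 'k) \<Rightarrow> ('d \<Rightarrow>\<^sub>0 'k)" where
  "pm_bilin m f g = (\<Sum>a\<in>Poly_Mapping.keys f. \<Sum>b\<in>Poly_Mapping.keys g.
      Poly_Mapping.single (m a b) (Poly_Mapping.lookup f a * Poly_Mapping.lookup g b))"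

lemma pm_conv_eq_bilin: "pm_conv m = pm_bilin m"
  by (simp add: fun_eq_iff pm_conv_def pm_bilin_def)

lemma pm_tprod_eq_bilin: "pm_tprod = pm_bilin Pair"
  by (simp add: fun_eq_iff pm_tprod_def pm_bilin_def)

lemma pm_bilin_ext_left: "pm_bilin m f g = pm_ext (\<lambda>a. pm_ext (\<lambda>b. pm_basis (m a b)) g) f"
  by (simp add: pm_bilin_def pm_ext_def pm_scale_sum pm_basis_def mult.commute)

lemma pm_bilin_ext_right: "pm_bilin m f g = pm_ext (\<lambda>b. pm_ext (\<lambda>a. pm_basis (m a b)) f) g"
  by (simp add: pm_bilin_def pm_ext_def pm_scale_sum pm_basis_def mult.commute
      sum.swap[of _ "Poly_Mapping.keys g"])

lemma pm_linear_bilin_left: "pm_linear (\<lambda>f. pm_bilin m f g)"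
  by (simp add: pm_bilin_ext_left pm_linear_ext)

lemma pm_linear_bilin_right: "pm_linear (\<lambda>g. pm_bilin m f g)"
  by (simp add: pm_bilin_ext_right pm_linear_ext)

lemma pm_bilin_basis [simp]: "pm_bilin m (pm_basis a) (pm_basis b) = pm_basis (m a b)"
  by (simp add: pm_bilin_ext_left)

lemma pm_bilin_sum_left: "pm_bilin m (sum f A) g = (\<Sum>a\<in>A. pm_bilin m (f a) g)"
  by (rule pm_linear_sum[OF pm_linear_bilin_left])

lemma pm_bilin_sum_right: "pm_bilin m f (sum g A) = (\<Sum>a\<in>A. pm_bilin m f (g a))"
  by (rule pm_linear_sum[OF pm_linear_bilin_right])

lemma pm_bilin_scale:
  "pm_bilin m (pm_scale c f) (pm_scale d g) = pm_scale (c * d) (pm_bilin m f g)"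
  by (simp add: pm_linear_scale[OF pm_linear_bilin_left] pm_linear_scale[OF pm_linear_bilin_right]
      mult.commute)

lemma pm_linear_bilin_left_comp: "pm_linear F \<Longrightarrow> pm_linear (\<lambda>x. pm_bilin m (F x) g)"
  by (rule pm_linear_comp[OF pm_linear_bilin_left])

lemma pm_linear_bilin_right_comp: "pm_linear F \<Longrightarrow> pm_linear (\<lambda>x. pm_bilin m f (F x))"
  by (rule pm_linear_comp[OF pm_linear_bilin_right])

lemmas pm_linear_bilin_intros =
  pm_linear_bilin_left pm_linear_bilin_right pm_linear_bilin_left_comp pm_linear_bilin_right_comp

lemma pm_bilinear_eqI:
  assumes "\<And>g. pm_linear (\<lambda>f. F f g)" "\<And>g. pm_linear (\<lambda>f. G f g)"
    and "\<And>f. pm_linear (F f)" "\<And>f. pm_linear (G f)"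
    and "\<And>a b. F (pm_basis a) (pm_basis b) = G (pm_basis a) (pm_basis b)"
  shows "F f g = G f g"
  by (rule pm_linear_eqI[OF assms(1,2)], rule pm_linear_eqI[OF assms(3,4)]) (rule assms(5))

lemma pm_bilin_hom:
  assumes F: "pm_linear F"
    and hom: "\<And>a b. F (pm_basis (m1 a b)) = pm_bilin m2 (F (pm_basis a)) (F (pm_basis b))"
  shows "F (pm_bilin m1 f g) = pm_bilin m2 (F f) (F g)"
  by (rule pm_bilinear_eqI[where F="\<lambda>f g. F (pm_bilin m1 f g)"])
    (simp_all add: hom pm_linear_comp[OF F] pm_linear_bilin_intros F)

lemma pm_bilin_assoc:
  assumes "\<And>a b c. m (m a b) c = m a (m b c)"
  shows "pm_bilin m (pm_bilin m f g) h = pm_bilin m f (pm_bilin m g h)"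
proof (rule pm_bilinear_eqI[where F="\<lambda>f g. pm_bilin m (pm_bilin m f g) h"])
  fix a b
  show "pm_bilin m (pm_bilin m (pm_basis a) (pm_basis b)) h
      = pm_bilin m (pm_basis a) (pm_bilin m (pm_basis b) h)"
    by (rule pm_linear_eqI) (simp_all add: assms pm_linear_bilin_intros)
qed (simp_all add: pm_linear_bilin_intros)

lemma pm_bilin_unit_left: "(\<And>b. m e b = b) \<Longrightarrow> pm_bilin m (pm_basis e) g = g"
  by (rule pm_linear_eqI[OF pm_linear_bilin_right pm_linear_id]) simp

lemma pm_bilin_unit_right: "(\<And>b. m b e = b) \<Longrightarrow> pm_bilin m g (pm_basis e) = g"
  by (rule pm_linear_eqI[OF pm_linear_bilin_left pm_linear_id]) simp

lemma pm_bilin_interchange: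
  "pm_bilin Pair (pm_bilin m1 f g) (pm_bilin m2 h k)
   = pm_bilin (\<lambda>(a, b) (c, d). (m1 a c, m2 b d)) (pm_bilin Pair f h) (pm_bilin Pair g k)"
proof (rule pm_bilinear_eqI[where F="\<lambda>f g. pm_bilin Pair (pm_bilin m1 f g) (pm_bilin m2 h k)"])
  fix a b
  show "pm_bilin Pair (pm_bilin m1 (pm_basis a) (pm_basis b)) (pm_bilin m2 h k)
      = pm_bilin (\<lambda>(a, b) (c, d). (m1 a c, m2 b d))
          (pm_bilin Pair (pm_basis a) h) (pm_bilin Pair (pm_basis b) k)"
    by (rule pm_bilinear_eqI[where
          F="\<lambda>h k. pm_bilin Pair (pm_bilin m1 (pm_basis a) (pm_basis b)) (pm_bilin m2 h k)" and
          G="\<lambda>h k. pm_bilin (\<lambda>(a, b) (c, d). (m1 a c, m2 b d))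
            (pm_bilin Pair (pm_basis a) h) (pm_bilin Pair (pm_basis b) k)"])
      (simp_all add: pm_linear_bilin_intros)
qed (simp_all add: pm_linear_bilin_intros)

definition gb_times :: "word \<times> mono \<Rightarrow> word \<times> mono \<Rightarrow> word \<times> mono" where
  "gb_times = (\<lambda>(a, b) (c, d). (a @ c, b + d))"

definition gg_times :: "word \<times> word \<Rightarrow> word \<times> word \<Rightarrow> word \<times> word" where
  "gg_times = (\<lambda>(a, b) (c, d). (a @ c, b @ d))"

definition ggb_times :: "(word \<times> word) \<times> mono \<Rightarrow> (word \<times> word) \<times> mono \<Rightarrow> (word \<times> word) \<times> mono" where
  "ggb_times = (\<lambda>(a, b) (c, d). (gg_times a c, b + d))"

lemma gb_times_simp [simp]: "gb_times (a, b) (c, d) = (a @ c, b + d)"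
  by (simp add: gb_times_def)

lemma gg_times_simp [simp]: "gg_times (a, b) (c, d) = (a @ c, b @ d)"
  by (simp add: gg_times_def)

lemma ggb_times_simp [simp]: "ggb_times (a, b) (c, d) = (gg_times a c, b + d)"
  by (simp add: ggb_times_def)

lemma gb_mult_eq_bilin: "gb_mult = pm_bilin gb_times"
  by (simp add: gb_mult_def pm_conv_eq_bilin gb_times_def)

lemma gg_mult_eq_bilin: "gg_mult = pm_bilin gg_times"
  by (simp add: gg_mult_def pm_conv_eq_bilin gg_times_def)

lemma gb_times_assoc: "gb_times (gb_times x y) z = gb_times x (gb_times y z)"
  by (cases x; cases y; cases z) (simp add: add.assoc)

lemma gg_times_assoc: "gg_times (gg_times x y) z = gg_times x (gg_times y z)"
  by (cases x; cases y; cases z) simp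

lemma rho_basis [simp]: "rho (pm_basis w) = rho_word w"
  by (simp add: rho_def)

lemma Delta0_basis [simp]: "Delta0 (pm_basis w) = Delta0_word w"
  by (simp add: Delta0_def)

lemma rho_word_Nil [simp]: "rho_word [] = pm_basis ([], {#})"
  by (simp add: rho_word_def)

lemma rho_word_Cons: "rho_word (P # w) = gb_mult (rho_gen P) (rho_word w)"
  by (simp add: rho_word_def)

lemma Delta0_word_Nil [simp]: "Delta0_word [] = pm_basis ([], [])"
  by (simp add: Delta0_word_def)

lemma Delta0_word_Cons: "Delta0_word (P # w) = gg_mult (Delta0_gen P) (Delta0_word w)"
  by (simp add: Delta0_word_def)

lemma rho_word_append:
  "rho_word (u @ v) = (gb_mult (rho_word u) (rho_word v) :: _ \<Rightarrow>\<^sub>0 'k::comm_ring_1)"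
proof (induction u)
  case Nil
  have "gb_times ([], {#}) b = b" for b by (cases b) simp
  then show ?case by (simp add: gb_mult_eq_bilin pm_bilin_unit_left)
next
  case (Cons P u)
  then show ?case by (simp add: rho_word_Cons gb_mult_eq_bilin pm_bilin_assoc gb_times_assoc)
qed

lemma Delta0_word_append:
  "Delta0_word (u @ v) = (gg_mult (Delta0_word u) (Delta0_word v) :: _ \<Rightarrow>\<^sub>0 'k::comm_ring_1)"
proof (induction u)
  case Nil
  have "gg_times ([], []) b = b" for b by (cases b) simp
  then show ?case by (simp add: gg_mult_eq_bilin pm_bilin_unit_left)
next
  case (Cons P u)
  then show ?case by (simp add: Delta0_word_Cons gg_mult_eq_bilin pm_bilin_assoc gg_times_assoc)
qed

lemma rho_gap_one: "rho (gap_one :: word \<Rightarrow>\<^sub>0 'k::comm_ring_1) = pm_basis ([], {#})"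
  by (simp add: gap_one_def)

lemma pm_linear_rho: "pm_linear rho"
  by (simp add: rho_def pm_linear_ext)

lemma rho_gap_mult: "rho (gap_mult P Q) = gb_mult (rho P) (rho Q)"
  unfolding gap_mult_def pm_conv_eq_bilin gb_mult_eq_bilin
  by (rule pm_bilin_hom[OF pm_linear_rho]) (simp add: rho_word_append gb_mult_eq_bilin)

lemma pm_linear_tensor_map: "pm_linear (pm_tensor_map \<phi> \<psi>)"
  by (simp add: pm_tensor_map_def pm_linear_ext)

lemma pm_linear_relabel: "pm_linear (pm_relabel h)"
  by (simp add: pm_relabel_def pm_linear_ext)

lemma pm_tensor_map_basis [simp]: "pm_tensor_map \<phi> \<psi> (pm_basis (x, y)) = pm_tprod (\<phi> x) (\<psi> y)"
  by (simp add: pm_tensor_map_def)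

lemma pm_relabel_basis [simp]: "pm_relabel h (pm_basis x) = pm_basis (h x)"
  by (simp add: pm_relabel_def pm_basis_def pm_ext_single)

lemma pm_tprod_basis [simp]: "pm_tprod (pm_basis x) (pm_basis y) = pm_basis (x, y)"
  by (simp add: pm_tprod_eq_bilin)

lemma m_bl_basis [simp]: "m_bl (pm_basis (b, d)) = pm_basis (b + d)"
  by (simp add: m_bl_def)

text \<open>The two sides of the compatibility of \<open>\<rho>\<close> with \<open>\<Delta>\<^sub>0\<close>: \<open>(\<Delta>\<^sub>0 \<otimes> Id) \<circ> \<rho>\<close> is
  \<open>Delta0_id \<circ> \<rho>\<close>, and \<open>(Id \<otimes> Id \<otimes> m\<^sub>b\<^sub>l) \<circ> (Id \<otimes> \<tau> \<otimes> Id) \<circ> (\<rho> \<otimes> \<rho>)\<close> is \<open>rho_rho_merge\<close>.\<close>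

definition Delta0_id :: "(word \<times> mono \<Rightarrow>\<^sub>0 'k::comm_ring_1) \<Rightarrow> ((word \<times> word) \<times> mono \<Rightarrow>\<^sub>0 'k)" where
  "Delta0_id = pm_tensor_map (\<lambda>w. Delta0 (pm_basis w)) pm_basis"

definition flip_merge ::
  "((word \<times> mono) \<times> (word \<times> mono) \<Rightarrow>\<^sub>0 'k::comm_ring_1) \<Rightarrow> ((word \<times> word) \<times> mono \<Rightarrow>\<^sub>0 'k)" where
  "flip_merge f = pm_tensor_map pm_basis (\<lambda>bd. m_bl (pm_basis bd))
     (pm_relabel (\<lambda>((a, b), (c, d)). ((a, c), (b, d))) f)"

definition rho_rho_merge :: "(word \<times> word \<Rightarrow>\<^sub>0 'k::comm_ring_1) \<Rightarrow> ((word \<times> word) \<times> mono \<Rightarrow>\<^sub>0 'k)" where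
  "rho_rho_merge f = flip_merge (pm_tensor_map (\<lambda>w. rho (pm_basis w)) (\<lambda>w. rho (pm_basis w)) f)"

lemma pm_linear_Delta0_id: "pm_linear Delta0_id"
  by (simp add: Delta0_id_def pm_linear_tensor_map)

lemma pm_linear_flip_merge: "pm_linear flip_merge"
  unfolding flip_merge_def[abs_def]
  by (rule pm_linear_comp[OF pm_linear_tensor_map pm_linear_relabel])

lemma pm_linear_rho_rho_merge: "pm_linear rho_rho_merge"
  unfolding rho_rho_merge_def[abs_def]
  by (rule pm_linear_comp[OF pm_linear_flip_merge pm_linear_tensor_map])

lemma Delta0_id_basis [simp]: "Delta0_id (pm_basis (w, m)) = pm_tprod (Delta0_word w) (pm_basis m)"
  by (simp add: Delta0_id_def)

lemma flip_merge_basis [simp]: "flip_merge (pm_basis ((a, b), (c, d))) = pm_basis ((a, c), b + d)"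
  by (simp add: flip_merge_def)

lemma rho_rho_merge_basis [simp]:
  "rho_rho_merge (pm_basis (a, c)) = flip_merge (pm_tprod (rho_word a) (rho_word c))"
  by (simp add: rho_rho_merge_def)

lemma Delta0_id_mult:
  "Delta0_id (pm_bilin gb_times x y) = pm_bilin ggb_times (Delta0_id x) (Delta0_id y)"
proof (rule pm_bilin_hom[OF pm_linear_Delta0_id])
  fix a b :: "word \<times> mono"
  obtain w1 m1 w2 m2 where ab: "a = (w1, m1)" "b = (w2, m2)" by (cases a; cases b)
  have "Delta0_id (pm_basis (gb_times a b))
      = pm_tprod (pm_bilin gg_times (Delta0_word w1) (Delta0_word w2))
          (pm_bilin (+) (pm_basis m1) (pm_basis m2))"
    by (simp add: ab Delta0_word_append gg_mult_eq_bilin)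
  also have "\<dots> = pm_bilin ggb_times (pm_tprod (Delta0_word w1) (pm_basis m1))
      (pm_tprod (Delta0_word w2) (pm_basis m2))"
    unfolding pm_tprod_eq_bilin pm_bilin_interchange ggb_times_def ..
  finally show "Delta0_id (pm_basis (gb_times a b))
      = pm_bilin ggb_times (Delta0_id (pm_basis a)) (Delta0_id (pm_basis b))"
    by (simp add: ab)
qed

lemma flip_merge_mult:
  "flip_merge (pm_bilin (\<lambda>(a, b) (c, d). (gb_times a c, gb_times b d)) x y)
   = pm_bilin ggb_times (flip_merge x) (flip_merge y)"
proof (rule pm_bilin_hom[OF pm_linear_flip_merge])
  fix u v :: "(word \<times> mono) \<times> (word \<times> mono)"
  obtain a b c d a' b' c' d' where "u = ((a, b), (c, d))" "v = ((a', b'), (c', d'))"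
    by (metis prod.exhaust)
  then show "flip_merge (pm_basis ((\<lambda>(a, b) (c, d). (gb_times a c, gb_times b d)) u v))
      = pm_bilin ggb_times (flip_merge (pm_basis u)) (flip_merge (pm_basis v))"
    by (simp add: add_ac)
qed

lemma rho_rho_merge_mult:
  "rho_rho_merge (pm_bilin gg_times x y) = pm_bilin ggb_times (rho_rho_merge x) (rho_rho_merge y)"
proof (rule pm_bilin_hom[OF pm_linear_rho_rho_merge])
  fix a b :: "word \<times> word"
  obtain a1 c1 a2 c2 where ab: "a = (a1, c1)" "b = (a2, c2)" by (cases a; cases b)
  have "rho_rho_merge (pm_basis (gg_times a b)) = flip_merge (pm_tprod
      (pm_bilin gb_times (rho_word a1) (rho_word a2))
      (pm_bilin gb_times (rho_word c1) (rho_word c2)))"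
    by (simp add: ab rho_word_append gb_mult_eq_bilin)
  also have "\<dots> = flip_merge (pm_bilin (\<lambda>(a, b) (c, d). (gb_times a c, gb_times b d))
      (pm_tprod (rho_word a1) (rho_word c1)) (pm_tprod (rho_word a2) (rho_word c2)))"
    unfolding pm_tprod_eq_bilin pm_bilin_interchange ..
  also have "\<dots> = pm_bilin ggb_times (rho_rho_merge (pm_basis a)) (rho_rho_merge (pm_basis b))"
    by (simp add: flip_merge_mult ab)
  finally show "rho_rho_merge (pm_basis (gg_times a b))
      = pm_bilin ggb_times (rho_rho_merge (pm_basis a)) (rho_rho_merge (pm_basis b))" .
qed

lemma Delta0_id_rho_word:
  assumes "\<And>P. P \<in> set w \<Longrightarrow>
    Delta0_id (rho_gen P) = (rho_rho_merge (Delta0_gen P) :: _ \<Rightarrow>\<^sub>0 'k::comm_ring_1)"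
  shows "Delta0_id (rho_word w) = (rho_rho_merge (Delta0_word w) :: _ \<Rightarrow>\<^sub>0 'k)"
  using assms
proof (induction w)
  case (Cons P w)
  have "Delta0_id (rho_word (P # w))
      = (pm_bilin ggb_times (Delta0_id (rho_gen P)) (Delta0_id (rho_word w)) :: _ \<Rightarrow>\<^sub>0 'k)"
    by (simp add: rho_word_Cons gb_mult_eq_bilin Delta0_id_mult)
  also have "\<dots> = pm_bilin ggb_times (rho_rho_merge (Delta0_gen P)) (rho_rho_merge (Delta0_word w))"
    using Cons by simp
  also have "\<dots> = rho_rho_merge (Delta0_word (P # w))"
    by (simp add: Delta0_word_Cons gg_mult_eq_bilin rho_rho_merge_mult)
  finally show ?case .
qed simp

lemma rank_mono: "finite X \<Longrightarrow> a \<le> b \<Longrightarrow> rank X a \<le> rank X b"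
  unfolding rank_def by (intro card_mono) auto

lemma rank_strict_mono:
  assumes "finite X" "x \<in> X" "y < x"
  shows "rank X y < rank X x"
proof -
  have "{z \<in> X. z \<le> y} \<subset> {z \<in> X. z \<le> x}"
  proof
    show "{z \<in> X. z \<le> y} \<subseteq> {z \<in> X. z \<le> x}" using assms(3) by auto
    show "{z \<in> X. z \<le> y} \<noteq> {z \<in> X. z \<le> x}"
      using assms(2,3) by (metis (mono_tags) mem_Collect_eq not_le order_refl)
  qed
  moreover have "finite {z \<in> X. z \<le> x}" using assms(1) by simp
  ultimately show ?thesis unfolding rank_def by (simp add: psubset_card_mono)
qed

lemma rank_le_card: "finite X \<Longrightarrow> rank X y \<le> card X"
  unfolding rank_def by (intro card_mono) auto

lemma rank_pos: "finite X \<Longrightarrow> x \<in> X \<Longrightarrow> 0 < rank X x"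
  unfolding rank_def by (subst card_gt_0_iff) auto

lemma rank_less_iff:
  assumes "finite X" "x \<in> X" "y \<in> X"
  shows "rank X x < rank X y \<longleftrightarrow> x < y"
  using rank_mono[OF assms(1), of y x] rank_strict_mono[OF assms(1,3), of x] by linarith

lemma inj_on_rank: "finite X \<Longrightarrow> inj_on (rank X) X"
  by (rule inj_onI) (metis rank_less_iff linorder_neqE_nat less_irrefl)

lemma rank_image: "finite X \<Longrightarrow> rank X ` X = {1..card X}"
  by (rule card_subset_eq)
    (auto simp: Suc_le_eq rank_pos rank_le_card card_image inj_on_rank)

lemma rank_image_strict_mono:
  fixes f :: "nat \<Rightarrow> nat"
  assumes mono: "\<And>a b. a \<in> Z \<Longrightarrow> b \<in> Z \<Longrightarrow> a < b \<Longrightarrow> f a < f b" and z: "z \<in> Z"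
  shows "rank (f ` Z) (f z) = rank Z z"
proof -
  have "strict_mono_on Z f" using mono by (simp add: strict_mono_on_def)
  then have inj: "inj_on f Z" and le: "\<And>a. a \<in> Z \<Longrightarrow> f a \<le> f z \<longleftrightarrow> a \<le> z"
    using z by (auto simp: strict_mono_on_leD strict_mono_on_imp_inj_on strict_mono_on_less_eq)
  have "{w \<in> f ` Z. w \<le> f z} = f ` {w \<in> Z. w \<le> z}"
    using le by auto
  then show ?thesis
    unfolding rank_def by (simp add: card_image inj_on_subset[OF inj])
qed

lemma rank_sorted_nth:
  assumes "finite X" "j < card X"
  shows "sorted_list_of_set X ! j \<in> X" "rank X (sorted_list_of_set X ! j) = Suc j"
proof -
  let ?s = "sorted_list_of_set X"
  have len: "length ?s = card X" by simp
  show "?s ! j \<in> X" using assms by (metis len nth_mem set_sorted_list_of_set)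
  have X: "X = (!) ?s ` {0..<card X}"
    using assms(1) len nth_image[of "card X" ?s] by simp
  have "rank X (?s ! j) = rank {0..<card X} j"
    by (subst X, rule rank_image_strict_mono)
      (use assms len in \<open>auto intro: sorted_wrt_nth_less strict_sorted_list_of_set\<close>)
  also have "\<dots> = Suc j"
  proof -
    have "{z \<in> {0..<card X}. z \<le> j} = {0..j}" using assms by auto
    then show ?thesis by (simp add: rank_def)
  qed
  finally show "rank X (?s ! j) = Suc j" .
qed

lemma sorted_nth_le_iff_rank:
  assumes "finite X" "j < card X"
  shows "sorted_list_of_set X ! j \<le> y \<longleftrightarrow> Suc j \<le> rank X y"
  using rank_sorted_nth[OF assms] rank_mono[OF assms(1)] rank_strict_mono[OF assms(1)]
  by (metis not_le not_less_eq_eq)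

lemma gap_eq_rank:
  assumes fX: "finite X" and i: "i \<le> card X"
  shows "gap P X i = {y \<in> {1..deg P}. y \<notin> X \<and> rank X y = i}"
proof -
  let ?s = "sorted_list_of_set X"
  have upper: "(i = card X \<or> y < ?s ! i) \<longleftrightarrow> rank X y \<le> i" for y
    using sorted_nth_le_iff_rank[OF fX, of i y] rank_le_card[OF fX, of y] i by fastforce
  have lower: "(i = 0 \<or> ?s ! (i - 1) < y) \<longleftrightarrow> i \<le> rank X y \<and> (i = 0 \<or> y \<noteq> ?s ! (i - 1))"
    for y
    using sorted_nth_le_iff_rank[OF fX, of "i - 1" y] i by (cases i) auto
  have in_X: "y \<in> X \<and> rank X y = i \<longleftrightarrow> i \<noteq> 0 \<and> y = ?s ! (i - 1)" for y
    using rank_sorted_nth[OF fX, of "i - 1"] rank_pos[OF fX, of y] inj_on_rank[OF fX] i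
    by (cases i) (auto simp: inj_on_def)
  have "((i = 0 \<or> ?s ! (i - 1) < y) \<and> (i = card X \<or> y < ?s ! i))
      \<longleftrightarrow> y \<notin> X \<and> rank X y = i" for y
    using upper[of y] lower[of y] in_X[of y] by auto
  then show ?thesis unfolding gap_def by simp
qed

lemma gap_subset: "gap P X i \<subseteq> {1..deg P}"
  by (auto simp: gap_def)

lemma finite_gap: "finite (gap P X i)"
  by (simp add: gap_def)

lemma gap_cong_deg: "deg Q = deg P \<Longrightarrow> gap Q X i = gap P X i"
  by (simp add: gap_def)

lemma gap_disjoint:
  "finite X \<Longrightarrow> i \<le> card X \<Longrightarrow> j \<le> card X \<Longrightarrow> i \<noteq> j \<Longrightarrow> gap P X i \<inter> gap P X j = {}"
  by (auto simp: gap_eq_rank)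

lemma gap_disjoint_set: "finite X \<Longrightarrow> i \<le> card X \<Longrightarrow> gap P X i \<inter> X = {}"
  by (auto simp: gap_eq_rank)

lemma mem_gap_rank:
  "finite X \<Longrightarrow> y \<in> {1..deg P} \<Longrightarrow> y \<notin> X \<Longrightarrow> y \<in> gap P X (rank X y)"
  by (simp add: gap_eq_rank rank_le_card)

lemma rank_mem_gap: "finite X \<Longrightarrow> i \<le> card X \<Longrightarrow> y \<in> gap P X i \<Longrightarrow> rank X y = i"
  by (simp add: gap_eq_rank)

lemma gap_interval:
  assumes fX: "finite X" and i: "i \<le> card X" and a: "a \<in> gap P X i" and b: "b \<in> gap P X i"
    and "a \<le> c" "c \<le> b"
  shows "c \<in> gap P X i"
proof -
  have "rank X a \<le> rank X c" "rank X c \<le> rank X b" using assms rank_mono[OF fX] by auto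
  moreover have "c \<notin> X"
    using a \<open>a \<le> c\<close> rank_strict_mono[OF fX, of c a] calculation(2) b
    by (cases "a = c") (auto simp: gap_eq_rank[OF fX i])
  ultimately show ?thesis using a b \<open>a \<le> c\<close> \<open>c \<le> b\<close> by (auto simp: gap_eq_rank[OF fX i])
qed

lemma partition_Union: "is_partition n P \<Longrightarrow> \<Union>P = {1..n}"
  by (simp add: is_partition_def)

lemma partition_block_subset: "is_partition n P \<Longrightarrow> B \<in> P \<Longrightarrow> B \<subseteq> {1..n}"
  using Union_upper[of B P] partition_Union[of n P] by simp

lemma partition_block_nonempty: "is_partition n P \<Longrightarrow> B \<in> P \<Longrightarrow> B \<noteq> {}"
  by (simp add: is_partition_def)

lemma partition_block_eq:
  "is_partition n P \<Longrightarrow> B \<in> P \<Longrightarrow> C \<in> P \<Longrightarrow> x \<in> B \<Longrightarrow> x \<in> C \<Longrightarrow> B = C"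
  unfolding is_partition_def by blast

lemma finite_partition: "is_partition n P \<Longrightarrow> finite P"
  using partition_block_subset[of n P] by (intro finite_subset[of P "Pow {1..n}"]) auto

lemma finite_partition_block: "is_partition n P \<Longrightarrow> B \<in> P \<Longrightarrow> finite B"
  by (rule finite_subset[OF partition_block_subset]) simp_all

lemma deg_partition: "is_partition n P \<Longrightarrow> deg P = n"
  by (simp add: deg_def is_partition_def)

lemma restr_partition:
  assumes P: "is_partition n P" and X: "X \<subseteq> {1..n}"
  shows "is_partition (card X) (restr P X)"
proof -
  have fX: "finite X" using X by (rule finite_subset) simp
  show ?thesis unfolding is_partition_def
  proof (intro conjI ballI impI)
    fix B' C' assume B': "B' \<in> restr P X" and C': "C' \<in> restr P X" and "B' \<noteq> C'"
    obtain B where "B \<in> P" and B: "B' = rank X ` (B \<inter> X)" using B' by (auto simp: restr_def)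
    obtain C where "C \<in> P" and C: "C' = rank X ` (C \<inter> X)" using C' by (auto simp: restr_def)
    have "B \<noteq> C" using \<open>B' \<noteq> C'\<close> B C by auto
    then have "B \<inter> C = {}" using partition_block_eq[OF P \<open>B \<in> P\<close> \<open>C \<in> P\<close>] by blast
    then show "B' \<inter> C' = {}"
      unfolding B C using inj_on_rank[OF fX] by (subst inj_on_image_Int[symmetric]) auto
  next
    have "\<Union>(restr P X) = rank X ` (\<Union>P \<inter> X)" unfolding restr_def by auto
    also have "\<Union>P \<inter> X = X" using X partition_Union[OF P] by auto
    finally show "\<Union>(restr P X) = {1..card X}" using rank_image[OF fX] by simp
  next
    fix B' assume "B' \<in> restr P X"
    then show "B' \<noteq> {}" unfolding restr_def by blast
  qed
qed

lemma deg_restr: "is_partition n P \<Longrightarrow> X \<subseteq> {1..n} \<Longrightarrow> deg (restr P X) = card X"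
  by (rule deg_partition[OF restr_partition])

lemma noncrossingD:
  assumes "noncrossing P" "B \<in> P" "C \<in> P" "B \<noteq> C" "a < c" "c < b" "b < d"
    "a \<in> B" "b \<in> B" "c \<in> C" "d \<in> C"
  shows False
proof -
  have "\<exists>B\<in>P. \<exists>C\<in>P. B \<noteq> C \<and>
      (\<exists>a b c d. a < c \<and> c < b \<and> b < d \<and> a \<in> B \<and> b \<in> B \<and> c \<in> C \<and> d \<in> C)"
    using assms(2-) by (intro bexI[of _ B] bexI[of _ C] conjI exI[of _ a] exI[of _ b] exI[of _ c]
      exI[of _ d]) simp_all
  then show False using assms(1) unfolding noncrossing_def by (elim notE)
qed

lemma noncrossingI:
  assumes "\<And>B C a b c d. B \<in> P \<Longrightarrow> C \<in> P \<Longrightarrow> B \<noteq> C \<Longrightarrow> a < c \<Longrightarrow> c < b \<Longrightarrow> b < d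
    \<Longrightarrow> a \<in> B \<Longrightarrow> b \<in> B \<Longrightarrow> c \<in> C \<Longrightarrow> d \<in> C \<Longrightarrow> False"
  shows "noncrossing P"
  unfolding noncrossing_def
proof (intro notI, elim bexE exE conjE)
  fix B C a b c d
  assume "B \<in> P" "C \<in> P" "B \<noteq> C" "a < c" "c < b" "b < d" "a \<in> B" "b \<in> B" "c \<in> C" "d \<in> C"
  then show False by (rule assms)
qed

lemma restr_noncrossing:
  assumes nc: "noncrossing P" and fX: "finite X"
  shows "noncrossing (restr P X)"
proof (rule noncrossingI)
  fix B' C' a b c d
  assume B': "B' \<in> restr P X" and C': "C' \<in> restr P X" and "B' \<noteq> C'"
    and o: "a < c" "c < b" "b < d" and m: "a \<in> B'" "b \<in> B'" "c \<in> C'" "d \<in> C'"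
  obtain B where B: "B \<in> P" "B' = rank X ` (B \<inter> X)" using B' by (auto simp: restr_def)
  obtain C where C: "C \<in> P" "C' = rank X ` (C \<inter> X)" using C' by (auto simp: restr_def)
  obtain a0 where a0: "a0 \<in> B \<inter> X" "a = rank X a0" using m(1) B(2) by blast
  obtain b0 where b0: "b0 \<in> B \<inter> X" "b = rank X b0" using m(2) B(2) by blast
  obtain c0 where c0: "c0 \<in> C \<inter> X" "c = rank X c0" using m(3) C(2) by blast
  obtain d0 where d0: "d0 \<in> C \<inter> X" "d = rank X d0" using m(4) C(2) by blast
  have "a0 < c0" "c0 < b0" "b0 < d0"
    using rank_less_iff[OF fX] o a0 b0 c0 d0 by auto
  moreover have "B \<noteq> C" using \<open>B' \<noteq> C'\<close> B C by auto
  ultimately show False using noncrossingD[OF nc B(1) C(1)] a0 b0 c0 d0 by blast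
qed

lemma NC_restr:
  assumes "NC P" "X \<subseteq> \<Union>P"
  shows "NC (restr P X)"
proof -
  obtain n where P: "is_partition n P" and nc: "noncrossing P" using assms(1) by (auto simp: NC_def)
  then have X: "X \<subseteq> {1..n}" using assms(2) partition_Union[OF P] by simp
  show ?thesis unfolding NC_def
    using restr_partition[OF P X] restr_noncrossing[OF nc] finite_subset[OF X] by blast
qed

lemma restr_Union_blocks:
  assumes P: "is_partition n P" and S: "S \<subseteq> P" and Y: "Y = \<Union>S"
  shows "restr P Y = (\<lambda>B. rank Y ` B) ` S"
proof -
  have "{B \<in> P. B \<inter> Y \<noteq> {}} = S"
    using S Y partition_block_nonempty[OF P] partition_block_eq[OF P] by blast
  moreover have "B \<inter> Y = B" if "B \<in> S" for B using that Y by blast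
  ultimately show ?thesis unfolding restr_def by (auto intro!: image_cong)
qed

lemma restr_restr:
  assumes fY: "finite Y" and Z: "Z \<subseteq> Y"
  shows "restr (restr P Y) (rank Y ` Z) = restr P Z"
proof -
  let ?Z' = "rank Y ` Z"
  have Int: "rank Y ` (B \<inter> Y) \<inter> ?Z' = rank Y ` (B \<inter> Z)" for B
    using inj_on_rank[OF fY] Z by (subst inj_on_image_Int[symmetric]) (auto intro: arg_cong)
  have "rank ?Z' (rank Y z) = rank Z z" if "z \<in> Z" for z
    using that Z by (intro rank_image_strict_mono) (auto intro: rank_less_iff[OF fY, THEN iffD2])
  then have rank_rank: "rank ?Z' ` (rank Y ` (B \<inter> Z)) = rank Z ` (B \<inter> Z)" for B
    by (auto simp: image_image intro!: image_cong)
  have "restr (restr P Y) ?Z' = (\<lambda>B. rank ?Z' ` (rank Y ` (B \<inter> Y) \<inter> ?Z'))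
      ` {B \<in> P. B \<inter> Y \<noteq> {} \<and> rank Y ` (B \<inter> Y) \<inter> ?Z' \<noteq> {}}"
    unfolding restr_def by auto
  also have "\<dots> = (\<lambda>B. rank Z ` (B \<inter> Z)) ` {B \<in> P. B \<inter> Z \<noteq> {}}"
    unfolding Int rank_rank using Z by (intro arg_cong[where f="image _"]) auto
  finally show ?thesis by (simp add: restr_def)
qed

text \<open>\<open>lift Y\<close> transports partitions of \<open>[card Y]\<close> back to \<open>Y\<close>, inverting \<open>restr _ Y\<close>.\<close>

definition lift :: "nat set \<Rightarrow> part \<Rightarrow> part" where
  "lift Y R = (\<lambda>B. {y \<in> Y. rank Y y \<in> B}) ` R"

lemma lift_subset: "\<tau> \<in> lift Y R \<Longrightarrow> \<tau> \<subseteq> Y"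
  by (auto simp: lift_def)

lemma lift_restr:
  assumes "finite Y" "\<And>B. B \<in> S \<Longrightarrow> B \<subseteq> Y"
  shows "lift Y ((\<lambda>B. rank Y ` B) ` S) = S"
proof -
  have "{y \<in> Y. rank Y y \<in> rank Y ` B} = B" if "B \<subseteq> Y" for B
    using that inj_on_rank[OF assms(1)] by (auto dest: inj_onD)
  then show ?thesis unfolding lift_def image_image using assms(2) by simp
qed

lemma image_rank_lift:
  assumes fY: "finite Y" and R: "\<Union>R \<subseteq> {1..card Y}"
  shows "(\<lambda>B. rank Y ` B) ` lift Y R = R"
proof -
  have "rank Y ` {y \<in> Y. rank Y y \<in> B} = B" if "B \<in> R" for B
    using that R rank_image[OF fY] by (auto simp: image_iff) (metis Sup_upper imageE subsetD)
  then show ?thesis unfolding lift_def image_image by simp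
qed

lemma Union_lift: "\<Union>(lift Y R) = {y \<in> Y. rank Y y \<in> \<Union>R}"
  by (auto simp: lift_def)

lemma lift_partition:
  assumes fY: "finite Y" and R: "is_partition (card Y) R"
  shows "\<tau> \<in> lift Y R \<Longrightarrow> \<tau> \<noteq> {}"
    and "\<tau>1 \<in> lift Y R \<Longrightarrow> \<tau>2 \<in> lift Y R \<Longrightarrow> \<tau>1 \<noteq> \<tau>2 \<Longrightarrow> \<tau>1 \<inter> \<tau>2 = {}"
    and "\<Union>(lift Y R) = Y"
proof -
  have img: "rank Y ` Y = {1..card Y}" by (rule rank_image[OF fY])
  show "\<tau> \<noteq> {}" if \<tau>: "\<tau> \<in> lift Y R"
  proof -
    obtain B where B: "B \<in> R" "\<tau> = {y \<in> Y. rank Y y \<in> B}" using \<tau> unfolding lift_def by blast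
    obtain x where "x \<in> B" using partition_block_nonempty[OF R B(1)] by auto
    then have "x \<in> rank Y ` Y" using partition_block_subset[OF R B(1)] img by auto
    then show ?thesis using B \<open>x \<in> B\<close> by auto
  qed
  show "\<tau>1 \<inter> \<tau>2 = {}" if "\<tau>1 \<in> lift Y R" "\<tau>2 \<in> lift Y R" "\<tau>1 \<noteq> \<tau>2"
    using that partition_block_eq[OF R] unfolding lift_def by blast
  show "\<Union>(lift Y R) = Y"
    unfolding Union_lift partition_Union[OF R] using img by auto
qed

lemma lift_noncrossing:
  assumes fY: "finite Y" and nc: "noncrossing R"
  shows "noncrossing (lift Y R)"
proof (rule noncrossingI)
  fix \<tau>1 \<tau>2 a b c d
  assume t1: "\<tau>1 \<in> lift Y R" and t2: "\<tau>2 \<in> lift Y R" and "\<tau>1 \<noteq> \<tau>2"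
    and o: "a < c" "c < b" "b < d" and m: "a \<in> \<tau>1" "b \<in> \<tau>1" "c \<in> \<tau>2" "d \<in> \<tau>2"
  obtain B1 where B1: "B1 \<in> R" "\<tau>1 = {y \<in> Y. rank Y y \<in> B1}" using t1 unfolding lift_def by blast
  obtain B2 where B2: "B2 \<in> R" "\<tau>2 = {y \<in> Y. rank Y y \<in> B2}" using t2 unfolding lift_def by blast
  have "B1 \<noteq> B2" using \<open>\<tau>1 \<noteq> \<tau>2\<close> B1 B2 by auto
  moreover have "a \<in> Y" "b \<in> Y" "c \<in> Y" "d \<in> Y" using B1 B2 m by auto
  then have "rank Y a < rank Y c" "rank Y c < rank Y b" "rank Y b < rank Y d"
    using rank_less_iff[OF fY] o by auto
  moreover have "rank Y a \<in> B1" "rank Y b \<in> B1" "rank Y c \<in> B2" "rank Y d \<in> B2"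
    using m B1 B2 by auto
  ultimately show False using noncrossingD[OF nc B1(1) B2(1)] by blast
qed

lemma coarsening_partition: "is_partition n P \<Longrightarrow> Q \<in> coarser_NC P \<Longrightarrow> is_partition n Q"
  by (simp add: coarser_NC_def deg_partition)

lemma coarsening_noncrossing: "Q \<in> coarser_NC P \<Longrightarrow> noncrossing Q"
  by (simp add: coarser_NC_def)

lemma coarsening_block_eq:
  assumes "Q \<in> coarser_NC P" "\<tau> \<in> Q"
  shows "\<tau> = \<Union>{\<sigma> \<in> P. \<sigma> \<subseteq> \<tau>}"
proof -
  obtain S where "S \<subseteq> P" "\<tau> = \<Union>S" using assms by (auto simp: coarser_NC_def refines_def)
  then show ?thesis by blast
qed

lemma coarsening_covers_block:
  assumes P: "is_partition n P" and Q: "Q \<in> coarser_NC P" and \<sigma>: "\<sigma> \<in> P"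
  shows "\<exists>\<tau>\<in>Q. \<sigma> \<subseteq> \<tau>"
proof -
  obtain y where y: "y \<in> \<sigma>" using partition_block_nonempty[OF P \<sigma>] by blast
  then have "y \<in> \<Union>P" using \<sigma> by blast
  then have "y \<in> \<Union>Q"
    using partition_Union[OF P] partition_Union[OF coarsening_partition[OF P Q]] by simp
  then obtain \<tau> where \<tau>: "\<tau> \<in> Q" "y \<in> \<tau>" by blast
  then obtain \<sigma>' where "\<sigma>' \<in> P" "\<sigma>' \<subseteq> \<tau>" "y \<in> \<sigma>'"
    using coarsening_block_eq[OF Q \<tau>(1)] by blast
  then show ?thesis using partition_block_eq[OF P \<sigma>] y \<tau>(1) by blast
qed

lemma finite_coarser_NC: "finite (coarser_NC P)"
proof (rule finite_subset)
  show "coarser_NC P \<subseteq> Pow (Pow {1..deg P})"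
  proof
    fix Q assume "Q \<in> coarser_NC P"
    then have "is_partition (deg P) Q" by (simp add: coarser_NC_def)
    then show "Q \<in> Pow (Pow {1..deg P})" using partition_block_subset by blast
  qed
qed simp

lemma coarser_NC_empty: "coarser_NC {} = {{}}"
proof -
  have "deg {} = 0" by (simp add: deg_def)
  then show ?thesis by (auto simp: coarser_NC_def is_partition_def noncrossing_def refines_def)
qed

lemma coarser_NC_nonempty:
  assumes "NC P" "P \<noteq> {}" "Q \<in> coarser_NC P"
  shows "Q \<noteq> {}"
proof -
  obtain n where P: "is_partition n P" using assms(1) by (auto simp: NC_def)
  have "n \<noteq> 0"
  proof
    assume "n = 0"
    then have "\<Union>P = {}" using partition_Union[OF P] by simp
    then show False using assms(2) partition_block_nonempty[OF P] by blast
  qed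
  then have "1 \<in> \<Union>Q" using partition_Union[OF coarsening_partition[OF P assms(3)]] by simp
  then show ?thesis by blast
qed

lemma restr_coarsening:
  assumes P: "is_partition n P" and Q: "Q \<in> coarser_NC P" and Y: "Y \<subseteq> {1..n}"
    and YQ: "Y = \<Union>{\<tau> \<in> Q. \<tau> \<subseteq> Y}"
  shows "restr Q Y \<in> coarser_NC (restr P Y)"
proof -
  have fY: "finite Y" using Y finite_subset by blast
  have rQ: "restr Q Y = (\<lambda>B. rank Y ` B) ` {\<tau> \<in> Q. \<tau> \<subseteq> Y}"
    by (rule restr_Union_blocks[OF coarsening_partition[OF P Q] _ YQ]) blast
  have "refines (restr P Y) (restr Q Y)"
    unfolding refines_def
  proof
    fix \<tau>' assume "\<tau>' \<in> restr Q Y"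
    then obtain \<tau> where \<tau>: "\<tau> \<in> Q" "\<tau> \<subseteq> Y" "\<tau>' = rank Y ` \<tau>" using rQ by blast
    let ?S = "{\<sigma> \<in> P. \<sigma> \<subseteq> \<tau>}"
    have "\<tau>' = \<Union>((\<lambda>B. rank Y ` B) ` ?S)"
      using coarsening_block_eq[OF Q \<tau>(1)] \<tau>(3) by (metis image_Union)
    moreover have "(\<lambda>B. rank Y ` B) ` ?S \<subseteq> restr P Y"
      using \<tau>(2) partition_block_nonempty[OF P] unfolding restr_def
      by (auto intro!: image_eqI simp: Int_absorb2)
    ultimately show "\<exists>S\<subseteq>restr P Y. \<tau>' = \<Union>S" by blast
  qed
  moreover have "is_partition (card Y) (restr Q Y)"
    by (rule restr_partition[OF coarsening_partition[OF P Q] Y])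
  ultimately show ?thesis unfolding coarser_NC_def
    using restr_noncrossing[OF coarsening_noncrossing[OF Q] fY] deg_restr[OF P Y] by simp
qed

lemma lift_coarsening_block:
  assumes P: "is_partition n P" and Y: "Y \<subseteq> {1..n}" and YP: "Y = \<Union>{\<sigma> \<in> P. \<sigma> \<subseteq> Y}"
    and R: "R \<in> coarser_NC (restr P Y)" and \<tau>: "\<tau> \<in> lift Y R"
  shows "\<exists>S\<subseteq>P. \<tau> = \<Union>S"
proof -
  have fY: "finite Y" using Y finite_subset by blast
  have rP: "restr P Y = (\<lambda>B. rank Y ` B) ` {\<sigma> \<in> P. \<sigma> \<subseteq> Y}"
    by (rule restr_Union_blocks[OF P _ YP]) blast
  obtain B where B: "B \<in> R" "\<tau> = {y \<in> Y. rank Y y \<in> B}" using \<tau> unfolding lift_def by blast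
  let ?S = "{B0 \<in> restr P Y. B0 \<subseteq> B}"
  have "\<tau> = \<Union>(lift Y ?S)"
    unfolding Union_lift B(2) using coarsening_block_eq[OF R B(1)] by simp
  moreover have "lift Y ?S \<subseteq> lift Y (restr P Y)" by (auto simp: lift_def)
  moreover have "lift Y (restr P Y) = {\<sigma> \<in> P. \<sigma> \<subseteq> Y}"
    unfolding rP by (rule lift_restr[OF fY]) blast
  ultimately show ?thesis by blast
qed

lemma quot_eq_sum: "finite Q \<Longrightarrow> quot P Q = (\<Sum>\<tau>\<in>Q. {#restr P \<tau>#})"
  unfolding quot_def by (induction rule: finite_induct) auto

lemma quot_restr:
  assumes P: "is_partition n P" and Q: "Q \<in> coarser_NC P" and Y: "Y \<subseteq> {1..n}"
    and YQ: "Y = \<Union>{\<tau> \<in> Q. \<tau> \<subseteq> Y}"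
  shows "quot (restr P Y) (restr Q Y) = (\<Sum>\<tau>\<in>{\<tau> \<in> Q. \<tau> \<subseteq> Y}. {#restr P \<tau>#})"
proof -
  let ?S = "{\<tau> \<in> Q. \<tau> \<subseteq> Y}"
  have fY: "finite Y" using Y finite_subset by blast
  have fS: "finite ?S" using finite_partition[OF coarsening_partition[OF P Q]] by simp
  have rQ: "restr Q Y = (\<lambda>B. rank Y ` B) ` ?S"
    by (rule restr_Union_blocks[OF coarsening_partition[OF P Q] _ YQ]) blast
  have inj: "inj_on (\<lambda>B. rank Y ` B) ?S"
    using inj_on_image_eq_iff[OF inj_on_rank[OF fY]] by (intro inj_onI) blast
  have "quot (restr P Y) (restr Q Y)
      = image_mset (\<lambda>\<tau>. restr (restr P Y) (rank Y ` \<tau>)) (mset_set ?S)"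
    unfolding quot_def rQ image_mset_mset_set[OF inj, symmetric]
    by (simp add: multiset.map_comp comp_def)
  also have "\<dots> = image_mset (restr P) (mset_set ?S)"
    using fS by (intro image_mset_cong) (auto intro!: restr_restr[OF fY])
  finally show ?thesis using quot_eq_sum[OF fS] unfolding quot_def by simp
qed

lemma lowerset_iff_Conv:
  "lowerset Q L \<longleftrightarrow> L \<subseteq> Q \<and> (\<forall>\<sigma>\<in>Q. \<sigma> \<notin> L \<longrightarrow> Conv \<sigma> \<inter> \<Union>L = {})"
proof
  assume l: "lowerset Q L"
  have "Conv \<sigma> \<inter> \<pi> = {}" if "\<sigma> \<in> Q" "\<sigma> \<notin> L" "\<pi> \<in> L" for \<sigma> \<pi>
  proof (rule ccontr)
    assume "Conv \<sigma> \<inter> \<pi> \<noteq> {}"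
    then have "arrow Q \<sigma> \<pi>"
      using that l unfolding arrow_def lowerset_def by (intro r_into_trancl) auto
    then show False using l that unfolding lowerset_def by blast
  qed
  then show "L \<subseteq> Q \<and> (\<forall>\<sigma>\<in>Q. \<sigma> \<notin> L \<longrightarrow> Conv \<sigma> \<inter> \<Union>L = {})"
    using l unfolding lowerset_def by blast
next
  assume h: "L \<subseteq> Q \<and> (\<forall>\<sigma>\<in>Q. \<sigma> \<notin> L \<longrightarrow> Conv \<sigma> \<inter> \<Union>L = {})"
  let ?r = "{(\<pi>, \<sigma>). \<pi> \<in> Q \<and> \<sigma> \<in> Q \<and> Conv \<pi> \<inter> \<sigma> \<noteq> {}}"
  have step: "\<sigma> \<in> L" if "(\<sigma>, \<pi>) \<in> ?r" "\<pi> \<in> L" for \<sigma> \<pi>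
    using h that by blast
  have "\<sigma> \<in> L" if "(\<sigma>, \<pi>) \<in> ?r\<^sup>+" "\<pi> \<in> L" for \<sigma> \<pi>
    using that by (induction rule: converse_trancl_induct) (auto intro: step)
  then show "lowerset Q L" using h unfolding lowerset_def arrow_def by blast
qed

lemma Conv_disjoint_iff_rank_Max_Min:
  assumes fX: "finite X" and f\<sigma>: "finite \<sigma>" "\<sigma> \<noteq> {}" and dj: "\<sigma> \<inter> X = {}"
  shows "Conv \<sigma> \<inter> X = {} \<longleftrightarrow> rank X (Max \<sigma>) = rank X (Min \<sigma>)"
proof
  assume c: "Conv \<sigma> \<inter> X = {}"
  have "z \<le> Min \<sigma>" if "z \<in> X" "z \<le> Max \<sigma>" for z
  proof (rule ccontr)
    assume "\<not> z \<le> Min \<sigma>"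
    then have "z \<in> Conv \<sigma> \<inter> X" using that by (auto simp: Conv_def)
    then show False using c by blast
  qed
  moreover have "Min \<sigma> \<le> Max \<sigma>" using f\<sigma> by simp
  ultimately have "{z \<in> X. z \<le> Max \<sigma>} = {z \<in> X. z \<le> Min \<sigma>}"
    by (auto intro: order_trans)
  then show "rank X (Max \<sigma>) = rank X (Min \<sigma>)" by (simp add: rank_def)
next
  assume eq: "rank X (Max \<sigma>) = rank X (Min \<sigma>)"
  show "Conv \<sigma> \<inter> X = {}"
  proof (rule ccontr)
    assume "Conv \<sigma> \<inter> X \<noteq> {}"
    then obtain x where x: "x \<in> X" "Min \<sigma> \<le> x" "x \<le> Max \<sigma>" by (auto simp: Conv_def)
    then have "Min \<sigma> < x" using Min_in[OF f\<sigma>] dj by (cases "Min \<sigma> = x") auto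
    then show False
      using rank_strict_mono[OF fX x(1)] rank_mono[OF fX x(3)] eq by fastforce
  qed
qed

lemma rank_const_iff_Max_Min:
  assumes fX: "finite X" and f\<sigma>: "finite \<sigma>" "\<sigma> \<noteq> {}"
  shows "(\<exists>i. \<forall>y\<in>\<sigma>. rank X y = i) \<longleftrightarrow> rank X (Max \<sigma>) = rank X (Min \<sigma>)"
proof
  assume eq: "rank X (Max \<sigma>) = rank X (Min \<sigma>)"
  have "rank X y = rank X (Min \<sigma>)" if "y \<in> \<sigma>" for y
  proof -
    have "Min \<sigma> \<le> y" "y \<le> Max \<sigma>" using that f\<sigma> by simp_all
    then show ?thesis using rank_mono[OF fX, of "Min \<sigma>" y] rank_mono[OF fX, of y "Max \<sigma>"] eq
      by linarith
  qed
  then show "\<exists>i. \<forall>y\<in>\<sigma>. rank X y = i" by blast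
next
  assume "\<exists>i. \<forall>y\<in>\<sigma>. rank X y = i"
  then show "rank X (Max \<sigma>) = rank X (Min \<sigma>)" using Min_in[OF f\<sigma>] Max_in[OF f\<sigma>] by metis
qed

lemma Conv_disjoint_iff_rank_const:
  "finite X \<Longrightarrow> finite \<sigma> \<Longrightarrow> \<sigma> \<noteq> {} \<Longrightarrow> \<sigma> \<inter> X = {}
    \<Longrightarrow> Conv \<sigma> \<inter> X = {} \<longleftrightarrow> (\<exists>i. \<forall>y\<in>\<sigma>. rank X y = i)"
  by (simp add: Conv_disjoint_iff_rank_Max_Min rank_const_iff_Max_Min)

lemma lowerset_iff_rank_const:
  assumes Q: "is_partition n Q"
  shows "lowerset Q L \<longleftrightarrow> L \<subseteq> Q \<and> (\<forall>\<sigma>\<in>Q. \<sigma> \<notin> L \<longrightarrow> (\<exists>i. \<forall>y\<in>\<sigma>. rank (\<Union>L) y = i))"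
proof -
  have "Conv \<sigma> \<inter> \<Union>L = {} \<longleftrightarrow> (\<exists>i. \<forall>y\<in>\<sigma>. rank (\<Union>L) y = i)"
    if L: "L \<subseteq> Q" and \<sigma>: "\<sigma> \<in> Q" "\<sigma> \<notin> L" for \<sigma>
  proof (rule Conv_disjoint_iff_rank_const)
    have "finite L" using L finite_partition[OF Q] by (rule finite_subset)
    then show "finite (\<Union>L)" using L finite_partition_block[OF Q] by blast
    show "finite \<sigma>" "\<sigma> \<noteq> {}"
      using finite_partition_block[OF Q \<sigma>(1)] partition_block_nonempty[OF Q \<sigma>(1)] .
    show "\<sigma> \<inter> \<Union>L = {}" using L \<sigma> partition_block_eq[OF Q] by blast
  qed
  then show ?thesis unfolding lowerset_iff_Conv by (meson subsetD)
qed

lemma lowerset_subset: "lowerset Q L \<Longrightarrow> L \<subseteq> Q"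
  by (simp add: lowerset_def)

lemma lowerset_Union_subset:
  assumes "is_partition n Q" "lowerset Q L"
  shows "\<Union>L \<subseteq> {1..n}"
  using partition_block_subset[OF assms(1)] lowerset_subset[OF assms(2)] by blast

lemma finite_lowerset_Union: "is_partition n Q \<Longrightarrow> lowerset Q L \<Longrightarrow> finite (\<Union>L)"
  by (rule finite_subset[OF lowerset_Union_subset]) simp_all

lemma lowerset_eq_blocks_in_Union:
  assumes Q: "is_partition n Q" and L: "lowerset Q L"
  shows "L = {\<tau> \<in> Q. \<tau> \<subseteq> \<Union>L}"
proof (intro set_eqI iffI)
  fix \<tau> assume \<tau>: "\<tau> \<in> {\<tau> \<in> Q. \<tau> \<subseteq> \<Union>L}"
  then obtain y where "y \<in> \<tau>" using partition_block_nonempty[OF Q] by blast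
  then obtain \<pi> where "\<pi> \<in> L" "y \<in> \<pi>" using \<tau> by blast
  then show "\<tau> \<in> L"
    using partition_block_eq[OF Q _ _ \<open>y \<in> \<tau>\<close>] \<tau> lowerset_subset[OF L] by blast
qed (use lowerset_subset[OF L] in blast)

lemma lowerset_block_in_gap:
  assumes Q: "is_partition n Q" and L: "lowerset Q L" and \<tau>: "\<tau> \<in> Q" "\<tau> \<notin> L"
  shows "\<exists>i\<le>card (\<Union>L). \<tau> \<subseteq> gap Q (\<Union>L) i"
proof -
  have fX: "finite (\<Union>L)" by (rule finite_lowerset_Union[OF Q L])
  obtain i where i: "\<And>y. y \<in> \<tau> \<Longrightarrow> rank (\<Union>L) y = i"
    using L \<tau> unfolding lowerset_iff_rank_const[OF Q] by blast
  obtain y where "y \<in> \<tau>" using partition_block_nonempty[OF Q \<tau>(1)] by blast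
  then have "i \<le> card (\<Union>L)" using i rank_le_card[OF fX] by metis
  moreover have "\<tau> \<inter> \<Union>L = {}"
    using \<tau> lowerset_subset[OF L] partition_block_eq[OF Q] by blast
  then have "\<tau> \<subseteq> gap Q (\<Union>L) i"
    using i partition_block_subset[OF Q \<tau>(1)] deg_partition[OF Q] \<open>i \<le> card (\<Union>L)\<close>
    by (auto simp: gap_eq_rank[OF fX])
  ultimately show ?thesis by blast
qed

lemma lowersetI_gap:
  assumes Q: "is_partition n Q" and "L \<subseteq> Q"
    and gap: "\<And>\<sigma>. \<sigma> \<in> Q \<Longrightarrow> \<sigma> \<notin> L \<Longrightarrow> \<exists>i\<le>card (\<Union>L). \<sigma> \<subseteq> gap Q (\<Union>L) i"
  shows "lowerset Q L"
proof -
  have "\<Union>L \<subseteq> {1..n}" using assms(2) partition_block_subset[OF Q] by blast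
  then have "finite (\<Union>L)" by (rule finite_subset) simp
  have "\<exists>i. \<forall>y\<in>\<sigma>. rank (\<Union>L) y = i" if \<sigma>: "\<sigma> \<in> Q" "\<sigma> \<notin> L" for \<sigma>
  proof -
    obtain i where "i \<le> card (\<Union>L)" "\<sigma> \<subseteq> gap Q (\<Union>L) i" using gap[OF \<sigma>] by blast
    then show ?thesis using rank_mem_gap[OF \<open>finite (\<Union>L)\<close> \<open>i \<le> card (\<Union>L)\<close>] by blast
  qed
  then show ?thesis unfolding lowerset_iff_rank_const[OF Q] using assms(2) by simp
qed

lemma gap_eq_Union_blocks:
  assumes Q: "is_partition n Q" and L: "lowerset Q L" and i: "i \<le> card (\<Union>L)"
  shows "gap Q (\<Union>L) i = \<Union>{\<tau> \<in> Q. \<tau> \<subseteq> gap Q (\<Union>L) i}"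
proof
  let ?X = "\<Union>L"
  have fX: "finite ?X" by (rule finite_lowerset_Union[OF Q L])
  show "gap Q ?X i \<subseteq> \<Union>{\<tau> \<in> Q. \<tau> \<subseteq> gap Q ?X i}"
  proof
    fix y assume y: "y \<in> gap Q ?X i"
    then have "y \<in> {1..deg Q}" using gap_subset by blast
    then have "y \<in> \<Union>Q" using partition_Union[OF Q] deg_partition[OF Q] by simp
    then obtain \<tau> where \<tau>: "\<tau> \<in> Q" "y \<in> \<tau>" by blast
    moreover have "\<tau> \<notin> L" using y \<tau>(2) gap_disjoint_set[OF fX i] by blast
    then obtain j where j: "j \<le> card ?X" "\<tau> \<subseteq> gap Q ?X j"
      using lowerset_block_in_gap[OF Q L \<tau>(1)] by blast
    moreover have "j = i" using gap_disjoint[OF fX i j(1)] y \<tau>(2) j(2) by blast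
    ultimately show "y \<in> \<Union>{\<tau> \<in> Q. \<tau> \<subseteq> gap Q ?X i}" by blast
  qed
qed blast

lemma partition_split_lowerset:
  assumes "is_partition n Q" "lowerset Q L"
  shows "Q = L \<union> (\<Union>i\<in>{..card (\<Union>L)}. {\<tau> \<in> Q. \<tau> \<subseteq> gap Q (\<Union>L) i})"
  using lowerset_block_in_gap[OF assms] lowerset_subset[OF assms(2)] by auto

section \<open>Cutting a noncrossing coarsening along a lowerset\<close>

text \<open>A set \<open>X \<subseteq> [deg P]\<close> with \<open>k\<close> elements cuts \<open>[deg P]\<close> into the pieces \<open>X, D\<^sub>0, \<dots>, D\<^sub>k\<close>;
  \<open>None\<close> indexes \<open>X\<close> and \<open>Some i\<close> the gap \<open>D\<^sub>i\<close>.\<close>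

definition pieces :: "nat set \<Rightarrow> nat option set" where
  "pieces X = insert None (Some ` {..card X})"

definition piece :: "part \<Rightarrow> nat set \<Rightarrow> nat option \<Rightarrow> nat set" where
  "piece P X j = (case j of None \<Rightarrow> X | Some i \<Rightarrow> gap P X i)"

lemma piece_simps [simp]: "piece P X None = X" "piece P X (Some i) = gap P X i"
  by (simp_all add: piece_def)

lemma mem_pieces_iff: "j \<in> pieces X \<longleftrightarrow> j = None \<or> (\<exists>i\<le>card X. j = Some i)"
  by (auto simp: pieces_def)

lemma pieces_simps [simp]: "None \<in> pieces X" "Some i \<in> pieces X \<longleftrightarrow> i \<le> card X"
  by (auto simp: pieces_def)

lemma finite_pieces: "finite (pieces X)"
  by (simp add: pieces_def)

lemma pieces_disjoint:
  assumes "finite X" "j \<in> pieces X" "k \<in> pieces X" "j \<noteq> k"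
  shows "piece P X j \<inter> piece P X k = {}"
proof (cases j; cases k)
  fix i i' assume "j = Some i" "k = Some i'"
  then show ?thesis using assms(2-4) gap_disjoint[OF assms(1)] by simp
next
  fix i assume "j = None" "k = Some i"
  then show ?thesis using assms(3) gap_disjoint_set[OF assms(1)] by auto
next
  fix i assume "j = Some i" "k = None"
  then show ?thesis using assms(2) gap_disjoint_set[OF assms(1)] by auto
qed (use assms(4) in simp)

lemma piece_subset: "X \<subseteq> {1..deg P} \<Longrightarrow> piece P X j \<subseteq> {1..deg P}"
  using gap_subset by (cases j) auto

lemma finite_piece: "finite X \<Longrightarrow> finite (piece P X j)"
  by (cases j) (simp_all add: finite_gap)

lemma UN_pieces:
  assumes "finite X" "X \<subseteq> {1..deg P}"
  shows "(\<Union>j\<in>pieces X. piece P X j) = {1..deg P}"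
proof
  show "{1..deg P} \<subseteq> (\<Union>j\<in>pieces X. piece P X j)"
  proof
    fix y assume y: "y \<in> {1..deg P}"
    show "y \<in> (\<Union>j\<in>pieces X. piece P X j)"
    proof (cases "y \<in> X")
      case False
      then have "y \<in> piece P X (Some (rank X y))" using mem_gap_rank[OF assms(1) y] by simp
      moreover have "Some (rank X y) \<in> pieces X" using rank_le_card[OF assms(1)] by simp
      ultimately show ?thesis by blast
    qed (use pieces_simps(1) in fastforce)
  qed
  show "(\<Union>j\<in>pieces X. piece P X j) \<subseteq> {1..deg P}" using piece_subset[OF assms(2)] by blast
qed

text \<open>Two crossing blocks never lie in different pieces: the middle element of one of them
  would lie in the same gap as the other.\<close>

lemma crossing_same_piece:
  assumes fX: "finite X" and j: "j \<in> pieces X" and k: "k \<in> pieces X"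
    and o: "a < c" "c < b" "b < d"
    and m: "a \<in> piece P X j" "b \<in> piece P X j" "c \<in> piece P X k" "d \<in> piece P X k"
  shows "j = k"
proof (rule ccontr)
  assume "j \<noteq> k"
  then consider i where "j = Some i" "i \<le> card X" | i where "k = Some i" "i \<le> card X"
    using j k by (auto simp: mem_pieces_iff)
  then show False
  proof cases
    case 1
    then have "c \<in> piece P X j" using gap_interval[OF fX 1(2), of a P b c] m o by simp
    then show False using pieces_disjoint[OF fX j k \<open>j \<noteq> k\<close>] m by blast
  next
    case 2
    then have "b \<in> piece P X k" using gap_interval[OF fX 2(2), of c P d b] m o by simp
    then show False using pieces_disjoint[OF fX j k \<open>j \<noteq> k\<close>] m by blast
  qed
qed

lemma is_partition_UN:
  assumes blocks: "\<And>j \<tau>. j \<in> J \<Longrightarrow> \<tau> \<in> B j \<Longrightarrow> \<tau> \<noteq> {}"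
    and disj: "\<And>j \<tau>1 \<tau>2. j \<in> J \<Longrightarrow> \<tau>1 \<in> B j \<Longrightarrow> \<tau>2 \<in> B j \<Longrightarrow> \<tau>1 \<noteq> \<tau>2 \<Longrightarrow> \<tau>1 \<inter> \<tau>2 = {}"
    and cover: "\<And>j. j \<in> J \<Longrightarrow> \<Union>(B j) = S j"
    and pieces: "\<And>j k. j \<in> J \<Longrightarrow> k \<in> J \<Longrightarrow> j \<noteq> k \<Longrightarrow> S j \<inter> S k = {}"
    and UN: "(\<Union>j\<in>J. S j) = {1..n}"
  shows "is_partition n (\<Union>j\<in>J. B j)"
  unfolding is_partition_def
proof (intro conjI ballI impI)
  fix \<tau>1 \<tau>2 assume "\<tau>1 \<in> (\<Union>j\<in>J. B j)" "\<tau>2 \<in> (\<Union>j\<in>J. B j)" "\<tau>1 \<noteq> \<tau>2"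
  then obtain j k where "j \<in> J" "\<tau>1 \<in> B j" "k \<in> J" "\<tau>2 \<in> B k" by blast
  moreover have "\<tau>1 \<subseteq> S j" "\<tau>2 \<subseteq> S k" using cover calculation by blast+
  ultimately show "\<tau>1 \<inter> \<tau>2 = {}"
  proof (cases "j = k")
    case False
    then show ?thesis using pieces[OF \<open>j \<in> J\<close> \<open>k \<in> J\<close>] \<open>\<tau>1 \<subseteq> S j\<close> \<open>\<tau>2 \<subseteq> S k\<close> by blast
  qed (use disj \<open>\<tau>1 \<noteq> \<tau>2\<close> in blast)
next
  have "\<Union>(\<Union>j\<in>J. B j) = (\<Union>j\<in>J. S j)" using cover by blast
  then show "\<Union>(\<Union>j\<in>J. B j) = {1..n}" using UN by simp
qed (use blocks in blast)

lemma gap_coarsening: "is_partition n P \<Longrightarrow> Q \<in> coarser_NC P \<Longrightarrow> gap Q X i = gap P X i"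
  by (rule gap_cong_deg) (simp add: deg_partition coarsening_partition)

context
  fixes n P Q L
  assumes P: "is_partition n P" and Q: "Q \<in> coarser_NC P" and L: "lowerset Q L"
begin

private lemma Q_partition: "is_partition n Q"
  by (rule coarsening_partition[OF P Q])

lemma cut_piece_eq_Union_blocks:
  assumes "j \<in> pieces (\<Union>L)"
  shows "piece P (\<Union>L) j = \<Union>{\<tau> \<in> Q. \<tau> \<subseteq> piece P (\<Union>L) j}"
proof (cases j)
  case None
  then show ?thesis using lowerset_eq_blocks_in_Union[OF Q_partition L] by simp
next
  case (Some i)
  then show ?thesis
    using gap_eq_Union_blocks[OF Q_partition L] assms gap_coarsening[OF P Q] by simp
qed

lemma coarsening_eq_UN_cut_pieces: "Q = (\<Union>j\<in>pieces (\<Union>L). {\<tau> \<in> Q. \<tau> \<subseteq> piece P (\<Union>L) j})"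
proof -
  have "{\<tau> \<in> Q. \<tau> \<subseteq> piece P (\<Union>L) None} = L"
    using lowerset_eq_blocks_in_Union[OF Q_partition L] by simp
  then show ?thesis
    using partition_split_lowerset[OF Q_partition L] gap_coarsening[OF P Q]
    by (auto simp: pieces_def)
qed

lemma cut_blocks_disjoint:
  assumes "j \<in> pieces (\<Union>L)" "k \<in> pieces (\<Union>L)" "j \<noteq> k"
  shows "{\<tau> \<in> Q. \<tau> \<subseteq> piece P (\<Union>L) j} \<inter> {\<tau> \<in> Q. \<tau> \<subseteq> piece P (\<Union>L) k} = {}"
  using pieces_disjoint[OF finite_lowerset_Union[OF Q_partition L] assms, of P]
    partition_block_nonempty[OF Q_partition] by blast

lemma cut_piece_subset: "piece P (\<Union>L) j \<subseteq> {1..n}"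
  using piece_subset[of "\<Union>L" P j] lowerset_Union_subset[OF Q_partition L] deg_partition[OF P]
  by simp

lemma restr_cut_mem_coarser_NC:
  "j \<in> pieces (\<Union>L) \<Longrightarrow> restr Q (piece P (\<Union>L) j) \<in> coarser_NC (restr P (piece P (\<Union>L) j))"
  by (rule restr_coarsening[OF P Q cut_piece_subset cut_piece_eq_Union_blocks])

lemma lift_restr_cut:
  assumes "j \<in> pieces (\<Union>L)"
  shows "lift (piece P (\<Union>L) j) (restr Q (piece P (\<Union>L) j)) = {\<tau> \<in> Q. \<tau> \<subseteq> piece P (\<Union>L) j}"
proof -
  let ?Y = "piece P (\<Union>L) j"
  have "restr Q ?Y = (\<lambda>B. rank ?Y ` B) ` {\<tau> \<in> Q. \<tau> \<subseteq> ?Y}"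
    by (rule restr_Union_blocks[OF Q_partition _ cut_piece_eq_Union_blocks[OF assms]]) blast
  then show ?thesis
    by (simp only:)
      (rule lift_restr[OF finite_piece[OF finite_lowerset_Union[OF Q_partition L]]], blast)
qed

lemma Union_blocks_below_lowerset: "\<Union>{\<pi> \<in> P. \<pi> \<subseteq> \<Union>L} = \<Union>L"
proof
  show "\<Union>L \<subseteq> \<Union>{\<pi> \<in> P. \<pi> \<subseteq> \<Union>L}"
  proof
    fix x assume "x \<in> \<Union>L"
    then obtain \<tau> where \<tau>: "\<tau> \<in> L" "x \<in> \<tau>" by blast
    then have "x \<in> \<Union>{\<sigma> \<in> P. \<sigma> \<subseteq> \<tau>}"
      using coarsening_block_eq[OF Q] lowerset_subset[OF L] by blast
    then show "x \<in> \<Union>{\<pi> \<in> P. \<pi> \<subseteq> \<Union>L}" using \<tau>(1) by blast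
  qed
qed blast

lemma lowerset_blocks_below: "lowerset P {\<pi> \<in> P. \<pi> \<subseteq> \<Union>L}"
proof (rule lowersetI_gap[OF P])
  fix \<sigma> assume \<sigma>: "\<sigma> \<in> P" "\<sigma> \<notin> {\<pi> \<in> P. \<pi> \<subseteq> \<Union>L}"
  obtain \<tau> where \<tau>: "\<tau> \<in> Q" "\<sigma> \<subseteq> \<tau>" using coarsening_covers_block[OF P Q \<sigma>(1)] by blast
  have "\<tau> \<notin> L" using \<sigma> \<tau> by blast
  then obtain i where "i \<le> card (\<Union>L)" "\<tau> \<subseteq> gap Q (\<Union>L) i"
    using lowerset_block_in_gap[OF Q_partition L \<tau>(1)] by blast
  then show "\<exists>i\<le>card (\<Union>{\<pi> \<in> P. \<pi> \<subseteq> \<Union>L}). \<sigma> \<subseteq> gap P (\<Union>{\<pi> \<in> P. \<pi> \<subseteq> \<Union>L}) i"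
    unfolding Union_blocks_below_lowerset using \<tau>(2) gap_coarsening[OF P Q] by auto
qed blast

lemma quot_cut:
  "quot P Q = (\<Sum>j\<in>pieces (\<Union>L). quot (restr P (piece P (\<Union>L) j)) (restr Q (piece P (\<Union>L) j)))"
proof -
  have fQ: "finite Q" by (rule finite_partition[OF Q_partition])
  have "quot P Q = (\<Sum>\<tau>\<in>(\<Union>j\<in>pieces (\<Union>L). {\<tau> \<in> Q. \<tau> \<subseteq> piece P (\<Union>L) j}). {#restr P \<tau>#})"
    using quot_eq_sum[OF fQ] coarsening_eq_UN_cut_pieces by simp
  also have "\<dots> = (\<Sum>j\<in>pieces (\<Union>L). \<Sum>\<tau>\<in>{\<tau> \<in> Q. \<tau> \<subseteq> piece P (\<Union>L) j}. {#restr P \<tau>#})"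
    using fQ cut_blocks_disjoint by (intro sum.UNION_disjoint) (simp_all add: finite_pieces)
  also have "\<dots> = (\<Sum>j\<in>pieces (\<Union>L). quot (restr P (piece P (\<Union>L) j)) (restr Q (piece P (\<Union>L) j)))"
    using quot_restr[OF P Q cut_piece_subset cut_piece_eq_Union_blocks] by simp
  finally show ?thesis .
qed

end

definition piece_part :: "part \<Rightarrow> part list \<Rightarrow> nat option \<Rightarrow> part" where
  "piece_part Q' qs j = (case j of None \<Rightarrow> Q' | Some i \<Rightarrow> qs ! i)"

lemma piece_part_simps [simp]: "piece_part Q' qs None = Q'" "piece_part Q' qs (Some i) = qs ! i"
  by (simp_all add: piece_part_def)

definition glue :: "part \<Rightarrow> part \<Rightarrow> part \<Rightarrow> part list \<Rightarrow> part" where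
  "glue P L Q' qs = (\<Union>j\<in>pieces (\<Union>L). lift (piece P (\<Union>L) j) (piece_part Q' qs j))"

context
  fixes n P L Q' qs
  assumes P: "is_partition n P" and L: "lowerset P L"
    and Q': "Q' \<in> coarser_NC (restr P (\<Union>L))"
    and qs: "\<And>i. i \<le> card (\<Union>L) \<Longrightarrow> qs ! i \<in> coarser_NC (restr P (gap P (\<Union>L) i))"
begin

private lemma fX: "finite (\<Union>L)"
  by (rule finite_lowerset_Union[OF P L])

private lemma piece_subset': "piece P (\<Union>L) j \<subseteq> {1..n}"
  using piece_subset[of "\<Union>L" P j] lowerset_Union_subset[OF P L] deg_partition[OF P] by simp

private lemma piece_part_mem_coarser_NC:
  "j \<in> pieces (\<Union>L) \<Longrightarrow> piece_part Q' qs j \<in> coarser_NC (restr P (piece P (\<Union>L) j))"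
  using Q' qs by (cases j) auto

private lemma piece_part_partition:
  "j \<in> pieces (\<Union>L) \<Longrightarrow> is_partition (card (piece P (\<Union>L) j)) (piece_part Q' qs j)"
  using coarsening_partition[OF restr_partition[OF P piece_subset'] piece_part_mem_coarser_NC] .

private lemma piece_eq_Union_blocks:
  assumes "j \<in> pieces (\<Union>L)"
  shows "piece P (\<Union>L) j = \<Union>{\<sigma> \<in> P. \<sigma> \<subseteq> piece P (\<Union>L) j}"
proof (cases j)
  case None
  then show ?thesis using lowerset_eq_blocks_in_Union[OF P L] by simp
next
  case (Some i)
  then show ?thesis using gap_eq_Union_blocks[OF P L] assms by simp
qed

lemma glue_partition: "is_partition n (glue P L Q' qs)"
  unfolding glue_def
proof (rule is_partition_UN)
  show "(\<Union>j\<in>pieces (\<Union>L). piece P (\<Union>L) j) = {1..n}"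
    using UN_pieces[OF fX] lowerset_Union_subset[OF P L] deg_partition[OF P] by simp
qed (use lift_partition[OF finite_piece[OF fX] piece_part_partition] pieces_disjoint[OF fX] in auto)

lemma glue_noncrossing: "noncrossing (glue P L Q' qs)"
proof (rule noncrossingI)
  fix \<tau>1 \<tau>2 a b c d
  assume "\<tau>1 \<in> glue P L Q' qs" "\<tau>2 \<in> glue P L Q' qs" and ne: "\<tau>1 \<noteq> \<tau>2"
    and o: "a < c" "c < b" "b < d" and m: "a \<in> \<tau>1" "b \<in> \<tau>1" "c \<in> \<tau>2" "d \<in> \<tau>2"
  then obtain j k where j: "j \<in> pieces (\<Union>L)" "\<tau>1 \<in> lift (piece P (\<Union>L) j) (piece_part Q' qs j)"
    and k: "k \<in> pieces (\<Union>L)" "\<tau>2 \<in> lift (piece P (\<Union>L) k) (piece_part Q' qs k)"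
    unfolding glue_def by blast
  have "j = k"
    using crossing_same_piece[OF fX j(1) k(1) o] m lift_subset[OF j(2)] lift_subset[OF k(2)]
    by blast
  then show False
    using noncrossingD[OF lift_noncrossing[OF finite_piece[OF fX]
          coarsening_noncrossing[OF piece_part_mem_coarser_NC[OF j(1)]]] j(2) _ ne o m] k(2) by simp
qed

lemma glue_mem_coarser_NC: "glue P L Q' qs \<in> coarser_NC P"
proof -
  have "refines P (glue P L Q' qs)"
    unfolding refines_def glue_def
    using lift_coarsening_block[OF P piece_subset' piece_eq_Union_blocks piece_part_mem_coarser_NC]
    by blast
  then show ?thesis
    unfolding coarser_NC_def using glue_partition glue_noncrossing deg_partition[OF P] by simp
qed

lemma glue_blocks_in_piece:
  assumes j: "j \<in> pieces (\<Union>L)"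
  shows "{\<tau> \<in> glue P L Q' qs. \<tau> \<subseteq> piece P (\<Union>L) j}
    = lift (piece P (\<Union>L) j) (piece_part Q' qs j)"
proof
  show "lift (piece P (\<Union>L) j) (piece_part Q' qs j)
      \<subseteq> {\<tau> \<in> glue P L Q' qs. \<tau> \<subseteq> piece P (\<Union>L) j}"
    using j lift_subset unfolding glue_def by blast
  show "{\<tau> \<in> glue P L Q' qs. \<tau> \<subseteq> piece P (\<Union>L) j}
      \<subseteq> lift (piece P (\<Union>L) j) (piece_part Q' qs j)"
  proof clarify
    fix \<tau> assume \<tau>: "\<tau> \<in> glue P L Q' qs" "\<tau> \<subseteq> piece P (\<Union>L) j"
    then obtain k where k: "k \<in> pieces (\<Union>L)" "\<tau> \<in> lift (piece P (\<Union>L) k) (piece_part Q' qs k)"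
      unfolding glue_def by blast
    have "\<tau> \<noteq> {}" using partition_block_nonempty[OF glue_partition \<tau>(1)] .
    then have "j = k"
      using pieces_disjoint[OF fX j k(1)] \<tau>(2) lift_subset[OF k(2)] by blast
    then show "\<tau> \<in> lift (piece P (\<Union>L) j) (piece_part Q' qs j)" using k(2) by simp
  qed
qed

lemma Union_lift_Union_lowerset: "\<Union>(lift (\<Union>L) Q') = \<Union>L"
  using lift_partition(3)[OF finite_piece[OF fX] piece_part_partition, of None] by simp

lemma glue_lowerset: "lowerset (glue P L Q' qs) (lift (\<Union>L) Q')"
proof (rule lowersetI_gap[OF glue_partition])
  show "lift (\<Union>L) Q' \<subseteq> glue P L Q' qs"
    using glue_blocks_in_piece[of None] by auto
  fix \<sigma> assume \<sigma>: "\<sigma> \<in> glue P L Q' qs" "\<sigma> \<notin> lift (\<Union>L) Q'"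
  then obtain k where k: "k \<in> pieces (\<Union>L)" "\<sigma> \<in> lift (piece P (\<Union>L) k) (piece_part Q' qs k)"
    unfolding glue_def by blast
  then obtain i where "k = Some i" "i \<le> card (\<Union>L)" using \<sigma>(2) by (cases k) auto
  then show "\<exists>i\<le>card (\<Union>(lift (\<Union>L) Q')). \<sigma> \<subseteq> gap (glue P L Q' qs) (\<Union>(lift (\<Union>L) Q')) i"
    using lift_subset[OF k(2)] gap_coarsening[OF P glue_mem_coarser_NC]
    unfolding Union_lift_Union_lowerset by auto
qed

lemma restr_glue_piece:
  assumes j: "j \<in> pieces (\<Union>L)"
  shows "restr (glue P L Q' qs) (piece P (\<Union>L) j) = piece_part Q' qs j"
proof -
  let ?Y = "piece P (\<Union>L) j"
  have "restr (glue P L Q' qs) ?Y = (\<lambda>B. rank ?Y ` B) ` lift ?Y (piece_part Q' qs j)"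
    using lift_partition(3)[OF finite_piece[OF fX] piece_part_partition[OF j]]
    by (intro restr_Union_blocks[OF glue_partition]) (auto simp flip: glue_blocks_in_piece[OF j])
  also have "\<dots> = piece_part Q' qs j"
    using image_rank_lift[OF finite_piece[OF fX]] partition_Union[OF piece_part_partition[OF j]]
    by simp
  finally show ?thesis .
qed

end

lemma mem_listset_iff: "xs \<in> listset As \<longleftrightarrow> length xs = length As \<and> (\<forall>i<length As. xs ! i \<in> As ! i)"
proof (induction As arbitrary: xs)
  case (Cons A As)
  then show ?case
    by (cases xs) (auto simp: set_Cons_def nth_Cons' split: if_splits)
qed simp

lemma mem_listset_single_iff: "qs \<in> listset [A] \<longleftrightarrow> (\<exists>Q\<in>A. qs = [Q])"
  by (auto simp: set_Cons_def)

lemma mem_listset_map_upt_iff: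
  "qs \<in> listset (map f [0..<m]) \<longleftrightarrow> length qs = m \<and> (\<forall>i<m. qs ! i \<in> f i)"
  by (simp add: mem_listset_iff)

lemma finite_listset: "(\<And>A. A \<in> set As \<Longrightarrow> finite A) \<Longrightarrow> finite (listset As)"
proof (induction As)
  case (Cons A As)
  have "listset (A # As) = (\<lambda>(a, b). a # b) ` (A \<times> listset As)"
    by (auto simp: set_Cons_def)
  then show ?case using Cons by simp
qed simp

definition coarsening_cuts :: "part \<Rightarrow> (part \<times> part) set" where
  "coarsening_cuts P = Sigma (coarser_NC P) (\<lambda>Q. {L. lowerset Q L})"

definition cut_coarsenings :: "part \<Rightarrow> (part \<times> part list \<times> part list) set" where
  "cut_coarsenings P = Sigma {L. lowerset P L} (\<lambda>L. listset [coarser_NC (restr P (\<Union>L))] \<times>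
      listset (map (\<lambda>i. coarser_NC (restr P (gap P (\<Union>L) i))) [0..<card (\<Union>L) + 1]))"

definition cut_map :: "part \<Rightarrow> part \<times> part \<Rightarrow> part \<times> part list \<times> part list" where
  "cut_map P = (\<lambda>(Q, L). ({\<pi> \<in> P. \<pi> \<subseteq> \<Union>L}, [restr Q (\<Union>L)],
      map (\<lambda>i. restr Q (gap P (\<Union>L) i)) [0..<card (\<Union>L) + 1]))"

definition glue_map :: "part \<Rightarrow> part \<times> part list \<times> part list \<Rightarrow> part \<times> part" where
  "glue_map P = (\<lambda>(L, qs1, qs2). (glue P L (hd qs1) qs2, lift (\<Union>L) (hd qs1)))"

lemma mem_cut_coarsenings_iff:
  "(L, qs1, qs2) \<in> cut_coarsenings P \<longleftrightarrow> lowerset P L \<and>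
     (\<exists>Q'. Q' \<in> coarser_NC (restr P (\<Union>L)) \<and> qs1 = [Q']) \<and> length qs2 = card (\<Union>L) + 1 \<and>
     (\<forall>i\<le>card (\<Union>L). qs2 ! i \<in> coarser_NC (restr P (gap P (\<Union>L) i)))"
  by (auto simp del: upt_Suc
      simp: cut_coarsenings_def mem_listset_single_iff mem_listset_map_upt_iff less_Suc_eq_le)

lemma cut_map_mem:
  assumes P: "is_partition n P" and a: "a \<in> coarsening_cuts P"
  shows "cut_map P a \<in> cut_coarsenings P"
proof -
  obtain Q L where a_eq: "a = (Q, L)" and Q: "Q \<in> coarser_NC P" and L: "lowerset Q L"
    using a by (auto simp: coarsening_cuts_def)
  show ?thesis
    unfolding a_eq cut_map_def mem_cut_coarsenings_iff split Union_blocks_below_lowerset[OF P Q L]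
    using lowerset_blocks_below[OF P Q L] restr_cut_mem_coarser_NC[OF P Q L, of None]
      restr_cut_mem_coarser_NC[OF P Q L, of "Some _"]
    by (simp del: upt_Suc add: nth_append)
qed

lemma glue_map_mem:
  assumes P: "is_partition n P" and b: "b \<in> cut_coarsenings P"
  shows "glue_map P b \<in> coarsening_cuts P"
proof -
  obtain L Q' qs where b_eq: "b = (L, [Q'], qs)" and L: "lowerset P L"
    and Q': "Q' \<in> coarser_NC (restr P (\<Union>L))"
    and qs: "\<And>i. i \<le> card (\<Union>L) \<Longrightarrow> qs ! i \<in> coarser_NC (restr P (gap P (\<Union>L) i))"
    using b by (cases b) (auto simp: mem_cut_coarsenings_iff)
  show ?thesis
    unfolding b_eq glue_map_def coarsening_cuts_def
    using glue_mem_coarser_NC[OF P L Q' qs] glue_lowerset[OF P L Q' qs] by simp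
qed

lemma glue_map_cut_map:
  assumes P: "is_partition n P" and a: "a \<in> coarsening_cuts P"
  shows "glue_map P (cut_map P a) = a"
proof -
  obtain Q L where a_eq: "a = (Q, L)" and Q: "Q \<in> coarser_NC P" and L: "lowerset Q L"
    using a by (auto simp: coarsening_cuts_def)
  let ?X = "\<Union>L"
  let ?qs = "map (\<lambda>i. restr Q (gap P ?X i)) [0..<card ?X + 1]"
  have "lift (piece P ?X j) (piece_part (restr Q ?X) ?qs j) = {\<tau> \<in> Q. \<tau> \<subseteq> piece P ?X j}"
    if "j \<in> pieces ?X" for j
    using that lift_restr_cut[OF P Q L that]
    by (cases j) (simp_all del: upt_Suc add: nth_append)
  then have "glue P {\<pi> \<in> P. \<pi> \<subseteq> ?X} (restr Q ?X) ?qs = Q"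
    unfolding glue_def Union_blocks_below_lowerset[OF P Q L]
    using coarsening_eq_UN_cut_pieces[OF P Q L] by simp
  moreover have "lift ?X (restr Q ?X) = L"
    using lift_restr_cut[OF P Q L, of None]
      lowerset_eq_blocks_in_Union[OF coarsening_partition[OF P Q] L]
    by simp
  ultimately show ?thesis
    unfolding a_eq cut_map_def glue_map_def by (simp add: Union_blocks_below_lowerset[OF P Q L])
qed

lemma cut_map_glue_map:
  assumes P: "is_partition n P" and b: "b \<in> cut_coarsenings P"
  shows "cut_map P (glue_map P b) = b"
proof -
  obtain L Q' qs where b_eq: "b = (L, [Q'], qs)" and L: "lowerset P L"
    and Q': "Q' \<in> coarser_NC (restr P (\<Union>L))" and len: "length qs = card (\<Union>L) + 1"
    and qs: "\<And>i. i \<le> card (\<Union>L) \<Longrightarrow> qs ! i \<in> coarser_NC (restr P (gap P (\<Union>L) i))"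
    using b by (cases b) (auto simp: mem_cut_coarsenings_iff)
  let ?G = "glue P L Q' qs"
  note restr_glue = restr_glue_piece[OF P L Q' qs]
  have "{\<pi> \<in> P. \<pi> \<subseteq> \<Union>L} = L" using lowerset_eq_blocks_in_Union[OF P L] by simp
  moreover have "restr ?G (\<Union>L) = Q'" using restr_glue[of None] by simp
  moreover have "map (\<lambda>i. restr ?G (gap P (\<Union>L) i)) [0..<card (\<Union>L) + 1] = qs"
    using len restr_glue[of "Some _"]
    by (intro nth_equalityI) (simp_all del: upt_Suc add: nth_append)
  ultimately show ?thesis
    unfolding b_eq glue_map_def cut_map_def by (simp add: Union_lift_Union_lowerset[OF P L Q' qs])
qed

lemma bij_betw_cut_map:
  "is_partition n P \<Longrightarrow> bij_betw (cut_map P) (coarsening_cuts P) (cut_coarsenings P)"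
  by (rule bij_betw_byWitness[where f'="glue_map P"])
    (auto simp: glue_map_cut_map cut_map_glue_map cut_map_mem glue_map_mem)

lemma sum_pieces: "(\<Sum>j\<in>pieces X. f j) = f None + (\<Sum>i\<le>card X. f (Some i))"
  unfolding pieces_def by (subst sum.insert) (auto simp: sum.reindex)

lemma sum_list_map2_quot_upt:
  "sum_list (map2 quot (map f [0..<m]) (map g [0..<m])) = (\<Sum>i<m. quot (f i) (g i))"
proof -
  have "map2 quot (map f [0..<m]) (map g [0..<m]) = map (\<lambda>i. quot (f i) (g i)) [0..<m]"
    by (simp add: zip_map_map zip_same_conv_map)
  then show ?thesis by (simp add: sum_set_upt_conv_sum_list_nat[symmetric] atLeast0LessThan)
qed

lemma finite_lowersets: "finite Q \<Longrightarrow> finite {L. lowerset Q L}"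
  by (rule finite_subset[of _ "Pow Q"]) (auto simp: lowerset_def)

text \<open>Reindexing along \<open>cut_map\<close>: the left-hand side is the shape of \<open>(\<Delta>\<^sub>0 \<otimes> Id) (\<rho> P)\<close>,
  the right-hand side that of \<open>(\<rho> \<otimes> \<rho>) (\<Delta>\<^sub>0 P)\<close> with the two \<open>B\<^sup>b\<^sup>l\<close> factors multiplied.\<close>

lemma sum_coarsening_cuts_eq:
  fixes h :: "(part list \<times> part list) \<times> part multiset \<Rightarrow> 'a::comm_monoid_add"
  assumes P: "is_partition n P"
  shows "(\<Sum>Q\<in>coarser_NC P. \<Sum>L\<in>{L. lowerset Q L}.
            h (([restr Q (\<Union>L)], map (\<lambda>i. restr Q (gap Q (\<Union>L) i)) [0..<card (\<Union>L) + 1]), quot P Q))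
       = (\<Sum>L\<in>{L. lowerset P L}. \<Sum>qs1\<in>listset [coarser_NC (restr P (\<Union>L))].
            \<Sum>qs2\<in>listset (map (\<lambda>i. coarser_NC (restr P (gap P (\<Union>L) i))) [0..<card (\<Union>L) + 1]).
            h ((qs1, qs2), sum_list (map2 quot [restr P (\<Union>L)] qs1)
               + sum_list (map2 quot (map (\<lambda>i. restr P (gap P (\<Union>L) i)) [0..<card (\<Union>L) + 1]) qs2)))"
  (is "?lhs = ?rhs")
proof -
  define g where "g = (\<lambda>(L, qs1, qs2). h ((qs1, qs2), sum_list (map2 quot [restr P (\<Union>L)] qs1)
     + sum_list (map2 quot (map (\<lambda>i. restr P (gap P (\<Union>L) i)) [0..<card (\<Union>L) + 1]) qs2)))"
  have "?lhs = (\<Sum>(Q, L)\<in>coarsening_cuts P.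
      h (([restr Q (\<Union>L)], map (\<lambda>i. restr Q (gap Q (\<Union>L) i)) [0..<card (\<Union>L) + 1]), quot P Q))"
    unfolding coarsening_cuts_def
    by (rule sum.Sigma[OF finite_coarser_NC])
      (auto intro: finite_lowersets finite_partition[OF coarsening_partition[OF P]])
  also have "\<dots> = sum (g \<circ> cut_map P) (coarsening_cuts P)"
  proof (rule sum.cong[OF refl], clarify)
    fix Q L assume "(Q, L) \<in> coarsening_cuts P"
    then have Q: "Q \<in> coarser_NC P" and L: "lowerset Q L" by (auto simp: coarsening_cuts_def)
    show "h (([restr Q (\<Union>L)], map (\<lambda>i. restr Q (gap Q (\<Union>L) i)) [0..<card (\<Union>L) + 1]), quot P Q)
        = (g \<circ> cut_map P) (Q, L)"
      unfolding g_def cut_map_def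
      using quot_cut[OF P Q L] Union_blocks_below_lowerset[OF P Q L] gap_coarsening[OF P Q]
      by (simp del: upt_Suc add: sum_pieces sum_list_map2_quot_upt lessThan_Suc_atMost)
  qed
  also have "\<dots> = sum g (cut_coarsenings P)"
    by (rule sum.reindex_bij_betw[OF bij_betw_cut_map[OF P], unfolded comp_def[symmetric]])
  also have "\<dots> = (\<Sum>L\<in>{L. lowerset P L}. \<Sum>qs\<in>listset [coarser_NC (restr P (\<Union>L))] \<times>
      listset (map (\<lambda>i. coarser_NC (restr P (gap P (\<Union>L) i))) [0..<card (\<Union>L) + 1]). g (L, qs))"
  proof -
    have "finite (listset [coarser_NC (restr P (\<Union>L))] \<times>
        listset (map (\<lambda>i. coarser_NC (restr P (gap P (\<Union>L) i))) [0..<card (\<Union>L) + 1]))" for L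
      by (intro finite_cartesian_product finite_listset) (auto simp: finite_coarser_NC)
    then show ?thesis unfolding cut_coarsenings_def
      by (subst sum.Sigma[OF finite_lowersets[OF finite_partition[OF P]]]) auto
  qed
  also have "\<dots> = ?rhs"
    by (simp add: g_def sum.cartesian_product split_beta)
  finally show ?thesis .
qed

lemma rho_gen_NC:
  assumes "NC P"
  shows "rho_gen P = (\<Sum>Q\<in>coarser_NC P. pm_basis ([Q], quot P Q))"
proof (cases "P = {}")
  case True
  then show ?thesis by (simp add: rho_gen_def coarser_NC_empty quot_def)
qed (simp add: rho_gen_def)

lemma rho_word_eq_sum:
  assumes "\<And>R. R \<in> set ws \<Longrightarrow> NC R"
  shows "rho_word ws = (\<Sum>qs\<in>listset (map coarser_NC ws).
     pm_basis (qs, sum_list (map2 quot ws qs)) :: _ \<Rightarrow>\<^sub>0 'k::comm_ring_1)"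
  using assms
proof (induction ws)
  case (Cons R ws)
  have "rho_word (R # ws) = (pm_bilin gb_times (rho_gen R) (rho_word ws) :: _ \<Rightarrow>\<^sub>0 'k)"
    by (simp add: rho_word_Cons gb_mult_eq_bilin)
  also have "\<dots> = (\<Sum>Q\<in>coarser_NC R. \<Sum>qs\<in>listset (map coarser_NC ws).
       pm_basis (Q # qs, quot R Q + sum_list (map2 quot ws qs)))"
    using Cons by (simp add: rho_gen_NC pm_bilin_sum_left pm_bilin_sum_right) (rule sum.swap)
  also have "\<dots> = (\<Sum>x\<in>coarser_NC R \<times> listset (map coarser_NC ws).
       pm_basis (fst x # snd x, quot R (fst x) + sum_list (map2 quot ws (snd x))))"
    by (simp add: sum.cartesian_product split_beta)
  also have "\<dots> = (\<Sum>qs\<in>(\<lambda>x. fst x # snd x) ` (coarser_NC R \<times> listset (map coarser_NC ws)).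
       pm_basis (qs, sum_list (map2 quot (R # ws) qs)))"
    by (subst sum.reindex) (auto simp: inj_on_def)
  also have "(\<lambda>x. fst x # snd x) ` (coarser_NC R \<times> listset (map coarser_NC ws))
      = listset (map coarser_NC (R # ws))"
    by (auto simp: set_Cons_def image_iff)
  finally show ?case .
qed simp

definition eps_gap_id :: "(word \<times> mono \<Rightarrow>\<^sub>0 'k::comm_ring_1) \<Rightarrow> (mono \<Rightarrow>\<^sub>0 'k)" where
  "eps_gap_id = pm_ext (\<lambda>(w, m). pm_scale (eps_gap (pm_basis w)) (pm_basis m))"

lemma eps_gap_basis [simp]: "eps_gap (pm_basis w :: word \<Rightarrow>\<^sub>0 'k::comm_ring_1) = eps_gap_word w"
  by (simp add: eps_gap_def pm_basis_def)

lemma eps_gap_word_append: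
  "(eps_gap_word (u @ v) :: 'k::comm_ring_1) = eps_gap_word u * eps_gap_word v"
  by (auto simp: eps_gap_word_def)

lemma eps_gap_id_basis [simp]:
  "eps_gap_id (pm_basis (w, m)) = pm_scale (eps_gap_word w) (pm_basis m)"
  by (simp add: eps_gap_id_def)

lemma eps_gap_id_mult:
  "eps_gap_id (pm_bilin gb_times x y) = pm_bilin (+) (eps_gap_id x) (eps_gap_id y)"
proof (rule pm_bilin_hom)
  show "pm_linear eps_gap_id" by (simp add: eps_gap_id_def pm_linear_ext)
  fix a b :: "word \<times> mono"
  show "eps_gap_id (pm_basis (gb_times a b))
      = pm_bilin (+) (eps_gap_id (pm_basis a)) (eps_gap_id (pm_basis b))"
    by (cases a; cases b) (simp add: pm_bilin_scale eps_gap_word_append)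
qed

lemma eps_gap_id_rho_gen:
  assumes "NC P"
  shows "eps_gap_id (rho_gen P) = pm_scale (eps_gap_word [P]) (pm_basis {#})"
proof (cases "P = {}")
  case False
  then have "eps_gap_id (rho_gen P) = (\<Sum>Q\<in>coarser_NC P. eps_gap_id (pm_basis ([Q], quot P Q)))"
    by (simp add: rho_gen_def pm_linear_sum[OF pm_linear_ext] eps_gap_id_def)
  also have "\<dots> = 0"
    using coarser_NC_nonempty[OF assms False] by (intro sum.neutral) (auto simp: eps_gap_word_def)
  finally show ?thesis using False by (simp add: eps_gap_word_def)
qed (simp add: rho_gen_def)

lemma eps_gap_id_rho_word:
  assumes "\<And>P. P \<in> set w \<Longrightarrow> NC P"
  shows "eps_gap_id (rho_word w)
    = (pm_scale (eps_gap_word w) (pm_basis {#}) :: mono \<Rightarrow>\<^sub>0 'k::comm_ring_1)"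
  using assms
proof (induction w)
  case (Cons P w)
  have "eps_gap_id (rho_word (P # w))
      = (pm_bilin (+) (eps_gap_id (rho_gen P)) (eps_gap_id (rho_word w)) :: mono \<Rightarrow>\<^sub>0 'k)"
    by (simp add: rho_word_Cons gb_mult_eq_bilin eps_gap_id_mult)
  also have "\<dots> = pm_scale (eps_gap_word [P] * eps_gap_word w) (pm_basis {#})"
    using Cons by (simp add: eps_gap_id_rho_gen pm_bilin_scale)
  finally show ?case by (simp add: eps_gap_word_append[of "[P]" w, simplified])
qed (simp add: eps_gap_word_def)

lemma rho_counit:
  fixes P :: "word \<Rightarrow>\<^sub>0 'k::comm_ring_1"
  assumes "in_Bgap P"
  shows "eps_gap_id (rho P) = pm_scale (eps_gap P) bl_one"
proof -
  have "eps_gap_id (rho P) = pm_ext (\<lambda>w. eps_gap_id (rho_word w)) P"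
    by (simp add: rho_def eps_gap_id_def pm_ext_compose)
  also have "\<dots> = pm_ext (\<lambda>w. pm_scale (eps_gap_word w) (pm_basis {#})) P"
    using assms by (intro pm_ext_cong eps_gap_id_rho_word) (auto simp: in_Bgap_def)
  also have "\<dots> = pm_scale (eps_gap P) bl_one"
    by (simp add: pm_ext_def eps_gap_def bl_one_def pm_scale_sum_left)
  finally show ?thesis .
qed

lemma rho_rho_merge_cut:
  assumes "NC P" "lowerset P L"
  shows "(rho_rho_merge (pm_basis ([restr P (\<Union>L)],
      map (\<lambda>i. restr P (gap P (\<Union>L) i)) [0..<card (\<Union>L) + 1])) :: _ \<Rightarrow>\<^sub>0 'k::comm_ring_1)
    = (\<Sum>qs1\<in>listset [coarser_NC (restr P (\<Union>L))].
      \<Sum>qs2\<in>listset (map (\<lambda>i. coarser_NC (restr P (gap P (\<Union>L) i))) [0..<card (\<Union>L) + 1]).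
        pm_basis ((qs1, qs2), sum_list (map2 quot [restr P (\<Union>L)] qs1)
          + sum_list (map2 quot (map (\<lambda>i. restr P (gap P (\<Union>L) i)) [0..<card (\<Union>L) + 1]) qs2)))"
proof -
  obtain n where P: "is_partition n P" using assms(1) by (auto simp: NC_def)
  have "NC (restr P (\<Union>L))"
    using NC_restr[OF assms(1)] lowerset_subset[OF assms(2)] by (metis Union_mono)
  then have X_eq: "rho_word [restr P (\<Union>L)] = (\<Sum>qs\<in>listset [coarser_NC (restr P (\<Union>L))].
      pm_basis (qs, sum_list (map2 quot [restr P (\<Union>L)] qs)) :: _ \<Rightarrow>\<^sub>0 'k)"
    by (subst rho_word_eq_sum) auto
  have gaps_eq: "rho_word (map (\<lambda>i. restr P (gap P (\<Union>L) i)) [0..<card (\<Union>L) + 1])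
    = (\<Sum>qs\<in>listset (map (\<lambda>i. coarser_NC (restr P (gap P (\<Union>L) i))) [0..<card (\<Union>L) + 1]).
        pm_basis (qs, sum_list (map2 quot (map (\<lambda>i. restr P (gap P (\<Union>L) i)) [0..<card (\<Union>L) + 1]) qs))
        :: _ \<Rightarrow>\<^sub>0 'k)"
    using NC_restr[OF assms(1)] gap_subset[of P] partition_Union[OF P] deg_partition[OF P]
    by (subst rho_word_eq_sum) (auto simp del: upt_Suc simp: comp_def)
  show ?thesis
    unfolding rho_rho_merge_basis X_eq gaps_eq pm_tprod_eq_bilin pm_bilin_sum_left pm_bilin_sum_right
      pm_linear_sum[OF pm_linear_flip_merge]
    by (simp del: upt_Suc) (rule sum.swap)
qed

lemma Delta0_id_rho_gen:
  assumes "NC P"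
  shows "Delta0_id (rho_gen P) = (rho_rho_merge (Delta0_gen P) :: _ \<Rightarrow>\<^sub>0 'k::comm_ring_1)"
proof -
  obtain n where P: "is_partition n P" using assms by (auto simp: NC_def)
  have unit: "gg_times b ([], []) = b" for b by (cases b) simp
  have "Delta0_id (rho_gen P) = (\<Sum>Q\<in>coarser_NC P. \<Sum>L\<in>{L. lowerset Q L}.
      pm_basis (([restr Q (\<Union>L)], map (\<lambda>i. restr Q (gap Q (\<Union>L) i)) [0..<card (\<Union>L) + 1]), quot P Q)
      :: _ \<Rightarrow>\<^sub>0 'k)"
    unfolding rho_gen_NC[OF assms] pm_linear_sum[OF pm_linear_Delta0_id]
    by (simp add: Delta0_word_Cons gg_mult_eq_bilin pm_bilin_unit_right[of gg_times, OF unit]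
        Delta0_gen_def pm_tprod_eq_bilin pm_bilin_sum_left)
  also have "\<dots> = (\<Sum>L\<in>{L. lowerset P L}. \<Sum>qs1\<in>listset [coarser_NC (restr P (\<Union>L))].
      \<Sum>qs2\<in>listset (map (\<lambda>i. coarser_NC (restr P (gap P (\<Union>L) i))) [0..<card (\<Union>L) + 1]).
      pm_basis ((qs1, qs2), sum_list (map2 quot [restr P (\<Union>L)] qs1)
        + sum_list (map2 quot (map (\<lambda>i. restr P (gap P (\<Union>L) i)) [0..<card (\<Union>L) + 1]) qs2)))"
    by (rule sum_coarsening_cuts_eq[OF P])
  also have "\<dots> = rho_rho_merge (Delta0_gen P)"
    unfolding Delta0_gen_def pm_linear_sum[OF pm_linear_rho_rho_merge]
    by (rule sum.cong[OF refl], rule rho_rho_merge_cut[OF assms, symmetric]) simp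
  finally show ?thesis .
qed

lemma rho_Delta0_compat:
  fixes P :: "word \<Rightarrow>\<^sub>0 'k::comm_ring_1"
  assumes "in_Bgap P"
  shows "Delta0_id (rho P) = rho_rho_merge (Delta0 P)"
proof -
  have "Delta0_id (rho P) = pm_ext (\<lambda>w. Delta0_id (rho_word w)) P"
    by (simp add: rho_def pm_ext_compose pm_linearD[OF pm_linear_Delta0_id, of "pm_ext rho_word P"])
      (simp add: pm_linearD[OF pm_linear_Delta0_id, symmetric])
  also have "\<dots> = pm_ext (\<lambda>w. rho_rho_merge (Delta0_word w)) P"
    using assms by (intro pm_ext_cong Delta0_id_rho_word Delta0_id_rho_gen) (auto simp: in_Bgap_def)
  also have "\<dots> = rho_rho_merge (Delta0 P)"
    by (simp add: Delta0_def pm_ext_compose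
        pm_linearD[OF pm_linear_rho_rho_merge, of "pm_ext Delta0_word P"])
      (simp add: pm_linearD[OF pm_linear_rho_rho_merge, symmetric])
  finally show ?thesis .
qed

theorem mainTheorem7:
  fixes P Q :: "word \<Rightarrow>\<^sub>0 'k::field"
  assumes "in_Bgap P" and "in_Bgap Q"
  shows "(rho (gap_one :: word \<Rightarrow>\<^sub>0 'k) = pm_basis ([], {#})) \<and>
      (rho (gap_mult P Q) = gb_mult (rho P) (rho Q)) \<and>
      (pm_ext (\<lambda>(w, m). pm_scale (eps_gap (pm_basis w)) (pm_basis m)) (rho P)
         = pm_scale (eps_gap P) bl_one) \<and>
      (pm_tensor_map (\<lambda>w. Delta0 (pm_basis w)) pm_basis (rho P)
         = pm_tensor_map pm_basis (\<lambda>bd. m_bl (pm_basis bd))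
             (pm_relabel (\<lambda>((a, b), (c, d)). ((a, c), (b, d)))
               (pm_tensor_map (\<lambda>w. rho (pm_basis w)) (\<lambda>w. rho (pm_basis w)) (Delta0 P))))"
  using rho_gap_one rho_gap_mult rho_counit[OF assms(1)] rho_Delta0_compat[OF assms(1)]
  unfolding eps_gap_id_def Delta0_id_def rho_rho_merge_def flip_merge_def by blast

end
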